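(* Let $A\in\mathcal E_n$ with $\operatorname{rk}(A)=r$, and let $A=BCB^T$ with $B\in\mathbb R_+^{n\times r}$ and $C\in\mathbb R_+^{r\times r}$ symmetric. Suppose that the only pair $(X,W)$ satisfying $$X\in\mathbb R_+^{n\times r},\quad W\in\mathbb R_+^{r\times r},\quad W=W^T,\quad X\circ B=0,\quad W\circ C=0,\quad WC=B^TX$$ is $X=0$, $W=0$. Then $A\notin\partial\mathcal E_n$.
   Context: $\mathcal S_n^+$ is the set of $n\times n$ symmetric entrywise nonnegative real matrices; $\mathbb R_+^{p\times q}$ the entrywise nonnegative $p\times q$ real matrices. The SNT-rank $\operatorname{st}_+(A)$ of $A\in\mathcal S_n^+$ is the minimal $k$ such that $A=BCB^T$ with $B\in\mathbb R_+^{n\times k}$ and $C\in\mathcal S_k^+$. $\mathcal E_n=\{A\in\mathcal S_n^+:\operatorname{rk}(A)=\operatorname{st}_+(A)\}$. $\partial\mathcal E_n$ is the set of $A\in\mathcal E_n$ such that $A-\alpha uu^T\notin\mathcal E_n$ for every $\alpha>0$, where $u$ is the Perron eigenvector of $A$ (an entrywise nonnegative unit eigenvector for the spectral radius of $A$). $X\circ B$ denotes the entrywise (Hadamard) product. *)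

theory Defs
  imports "Jordan_Normal_Form.Spectral_Radius" "Jordan_Normal_Form.DL_Rank"
begin

definition nonneg_mat :: "real mat \<Rightarrow> bool" where
  "nonneg_mat M \<longleftrightarrow> (\<forall>i<dim_row M. \<forall>j<dim_col M. M $$ (i, j) \<ge> 0)"

definition symnn :: "nat \<Rightarrow> real mat set" where
  "symnn n = {A. A \<in> carrier_mat n n \<and> transpose_mat A = A \<and> nonneg_mat A}"

definition hadamard :: "real mat \<Rightarrow> real mat \<Rightarrow> real mat" where
  "hadamard X Y = mat (dim_row X) (dim_col X) (\<lambda>(i, j). X $$ (i, j) * Y $$ (i, j))"

definition mrank :: "real mat \<Rightarrow> nat" where
  "mrank A = vec_space.rank (dim_row A) A"

definition snt_rank :: "real mat \<Rightarrow> nat" where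
  "snt_rank A = (LEAST k. \<exists>B C. B \<in> carrier_mat (dim_row A) k \<and> nonneg_mat B \<and>
        C \<in> symnn k \<and> A = B * C * transpose_mat B)"

definition E_set :: "nat \<Rightarrow> real mat set" where
  "E_set n = {A \<in> symnn n. mrank A = snt_rank A}"

definition perron_vec :: "real mat \<Rightarrow> real vec \<Rightarrow> bool" where
  "perron_vec A u \<longleftrightarrow> u \<in> carrier_vec (dim_row A) \<and> (\<forall>i<dim_vec u. u $ i \<ge> 0) \<and>
     u \<bullet> u = 1 \<and> A *\<^sub>v u = spectral_radius (map_mat complex_of_real A) \<cdot>\<^sub>v u"

definition outer :: "real vec \<Rightarrow> real mat" where
  "outer u = mat (dim_vec u) (dim_vec u) (\<lambda>(i, j). u $ i * u $ j)"

definition bd_E :: "nat \<Rightarrow> real mat set" where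
  "bd_E n = {A \<in> E_set n. \<exists>u. perron_vec A u \<and>
      (\<forall>\<alpha>::real. \<alpha> > 0 \<longrightarrow> A - \<alpha> \<cdot>\<^sub>m outer u \<notin> E_set n)}"

end

theory Submission
  imports Defs
begin

text \<open>
  Let \<open>u\<close> be the Perron vector of \<open>A = B C B\<^sup>T\<close>, with eigenvalue \<open>\<rho> > 0\<close>. Then \<open>u = B v\<close> for
  \<open>v = C B\<^sup>T u / \<rho>\<close>, hence \<open>A - \<alpha> u u\<^sup>T = B (C - \<alpha> v v\<^sup>T) B\<^sup>T\<close>. For any square \<open>D\<close> and small
  \<open>\<alpha> > 0\<close> the factors \<open>B (1 + \<alpha> D)\<^sup>-\<^sup>1\<close> and \<open>(1 + \<alpha> D) (C - \<alpha> v v\<^sup>T) (1 + \<alpha> D)\<^sup>T\<close> reproduce this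
  matrix; to first order their entries are \<open>B - \<alpha> B D\<close> and \<open>C + \<alpha> (D C + C D\<^sup>T - v v\<^sup>T)\<close>. They
  stay nonnegative if \<open>D\<close> makes the first-order terms strictly positive at the zero entries of
  \<open>B\<close> and \<open>C\<close>. This is a linear system in \<open>D\<close>, and by Farkas' lemma it is solvable unless there
  is a nonnegative certificate, which is precisely a nonzero pair \<open>(X, W)\<close> as excluded by the
  hypothesis. So \<open>A - \<alpha> u u\<^sup>T\<close> factors through \<open>r\<close> columns, its rank is still \<open>r\<close> because
  \<open>\<alpha> < \<rho>\<close>, and it lies in \<open>E\<^sub>n\<close> for all small \<open>\<alpha> > 0\<close>: \<open>A\<close> is not on the boundary.
\<close>

section \<open>Farkas' lemma via Fourier--Motzkin elimination\<close>

text \<open>A constraint \<open>(k, a, b)\<close> stands for \<open>b \<le> \<Sum>v. a v * x v\<close>; the tag \<open>k\<close> only keeps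
  constraints with equal data apart.\<close>

inductive nonneg_comb :: "('k \<times> ('v \<Rightarrow> real) \<times> real) set \<Rightarrow> ('v \<Rightarrow> real) \<Rightarrow> real \<Rightarrow> bool"
  for S where
  zero: "nonneg_comb S (\<lambda>_. 0) 0"
| add: "(k, a, b) \<in> S \<Longrightarrow> c \<ge> 0 \<Longrightarrow> nonneg_comb S a' b' \<Longrightarrow>
    nonneg_comb S (\<lambda>v. c * a v + a' v) (c * b + b')"

lemma nonneg_comb_member: "(k, a, b) \<in> S \<Longrightarrow> nonneg_comb S a b"
  using nonneg_comb.add[OF _ _ nonneg_comb.zero, of k a b S 1] by simp

lemma nonneg_comb_plus:
  "nonneg_comb S a b \<Longrightarrow> nonneg_comb S a' b' \<Longrightarrow> nonneg_comb S (\<lambda>v. a v + a' v) (b + b')"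
proof (induction rule: nonneg_comb.induct)
  case zero
  then show ?case by simp
next
  case (add k a b c a0 b0)
  have "nonneg_comb S (\<lambda>v. c * a v + (a0 v + a' v)) (c * b + (b0 + b'))"
    by (rule nonneg_comb.add[OF add(1,2) add(4)[OF add(5)]])
  then show ?case by (simp add: algebra_simps)
qed

lemma nonneg_comb_scale:
  "nonneg_comb S a b \<Longrightarrow> (c::real) \<ge> 0 \<Longrightarrow> nonneg_comb S (\<lambda>v. c * a v) (c * b)"
proof (induction rule: nonneg_comb.induct)
  case zero
  then show ?case using nonneg_comb.zero by simp
next
  case (add k a b c' a0 b0)
  have "nonneg_comb S (\<lambda>v. (c * c') * a v + c * a0 v) ((c * c') * b + c * b0)"
    by (rule nonneg_comb.add[OF add(1) _ add(4)[OF add(5)]]) (use add in auto)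
  then show ?case by (simp add: algebra_simps)
qed

lemma nonneg_comb_trans:
  assumes "nonneg_comb S' a b" and "\<And>k a b. (k, a, b) \<in> S' \<Longrightarrow> nonneg_comb S a b"
  shows "nonneg_comb S a b"
  using assms
proof (induction rule: nonneg_comb.induct)
  case zero
  show ?case by (rule nonneg_comb.zero)
next
  case (add k a b c a' b')
  show ?case
    by (rule nonneg_comb_plus[OF nonneg_comb_scale[OF add(5)[OF add(1)] add(2)] add(4)[OF add(5)]])
qed

lemma nonneg_comb_vanishes:
  assumes "nonneg_comb S a b" and "\<And>k a b. (k, a, b) \<in> S \<Longrightarrow> a w = 0"
  shows "a w = 0"
  using assms by (induction rule: nonneg_comb.induct) auto

lemma nonneg_comb_coefficients:
  assumes "finite S" and "nonneg_comb S a b"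
  shows "\<exists>l. (\<forall>s\<in>S. l s \<ge> 0) \<and> (\<forall>v. a v = (\<Sum>s\<in>S. l s * fst (snd s) v)) \<and>
     b = (\<Sum>s\<in>S. l s * snd (snd s))"
  using assms(2)
proof (induction rule: nonneg_comb.induct)
  case zero
  show ?case by (rule exI[of _ "\<lambda>_. 0"]) simp
next
  case (add k a b c a' b')
  then obtain l where l: "\<forall>s\<in>S. l s \<ge> 0" "\<forall>v. a' v = (\<Sum>s\<in>S. l s * fst (snd s) v)"
     "b' = (\<Sum>s\<in>S. l s * snd (snd s))" by blast
  define l' where "l' s = l s + (if s = (k, a, b) then c else 0)" for s
  have sum_l': "(\<Sum>s\<in>S. l' s * g s) = c * g (k, a, b) + (\<Sum>s\<in>S. l s * g s)" for g :: "_ \<Rightarrow> real"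
    using add(1) assms(1)
    by (simp add: l'_def distrib_right sum.distrib if_distrib[of "\<lambda>x. x * _"] sum.delta)
  have "\<forall>s\<in>S. l' s \<ge> 0" using l add(2) by (simp add: l'_def)
  moreover have "\<forall>v. c * a v + a' v = (\<Sum>s\<in>S. l' s * fst (snd s) v)" using l by (simp add: sum_l')
  moreover have "c * b + b' = (\<Sum>s\<in>S. l' s * snd (snd s))" using l by (simp add: sum_l')
  ultimately show ?case by blast
qed

definition fm_eliminate :: "'v \<Rightarrow> ('k \<times> ('v \<Rightarrow> real) \<times> real) set \<Rightarrow> ('k \<times> ('v \<Rightarrow> real) \<times> real) set"
  where "fm_eliminate w S = {s \<in> S. fst (snd s) w = 0} \<union>
    {(k, \<lambda>v. - a' w * a v + a w * a' v, - a' w * b + a w * b') | k a b k' a' b'.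
       (k, a, b) \<in> S \<and> a w > 0 \<and> (k', a', b') \<in> S \<and> a' w < 0}"

lemma finite_fm_eliminate:
  assumes "finite S"
  shows "finite (fm_eliminate w S)"
proof -
  let ?f = "\<lambda>((k, a, b), (k', a', b')). (k, \<lambda>v. - a' w * a v + a w * a' v, - a' w * b + a w * b')"
  have "fm_eliminate w S \<subseteq> S \<union> ?f ` (S \<times> S)"
    unfolding fm_eliminate_def by (auto simp: image_iff) force
  then show ?thesis by (rule finite_subset) (use assms in auto)
qed

lemma nonneg_comb_fm_eliminate:
  assumes "nonneg_comb (fm_eliminate w S) a b"
  shows "nonneg_comb S a b" and "a w = 0"
proof -
  show "nonneg_comb S a b"
  proof (rule nonneg_comb_trans[OF assms])
    fix k a b assume "(k, a, b) \<in> fm_eliminate w S"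
    then consider "(k, a, b) \<in> S"
      | ap bp k' aq bq where "(k, ap, bp) \<in> S" "(k', aq, bq) \<in> S"
         "a = (\<lambda>v. - aq w * ap v + ap w * aq v)" "b = - aq w * bp + ap w * bq" "ap w > 0" "aq w < 0"
      unfolding fm_eliminate_def by auto
    then show "nonneg_comb S a b"
    proof cases
      case 1
      then show ?thesis by (rule nonneg_comb_member)
    next
      case 2
      then show ?thesis
        using nonneg_comb_plus[OF nonneg_comb_scale[OF nonneg_comb_member[OF 2(1)], of "- aq w"]
            nonneg_comb_scale[OF nonneg_comb_member[OF 2(2)], of "ap w"]] by simp
    qed
  qed
  show "a w = 0"
    by (rule nonneg_comb_vanishes[OF assms]) (auto simp: fm_eliminate_def)
qed

lemma fm_eliminate_bounds_ordered:
  assumes x: "\<forall>(k, a, b) \<in> fm_eliminate w S. b \<le> (\<Sum>v\<in>V. a v * x v)"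
    and p: "(k, ap, bp) \<in> S" "0 < ap w" and q: "(k', aq, bq) \<in> S" "aq w < 0"
  shows "(bp - (\<Sum>v\<in>V. ap v * x v)) / ap w \<le> (bq - (\<Sum>v\<in>V. aq v * x v)) / aq w"
proof -
  have "(k, \<lambda>v. - aq w * ap v + ap w * aq v, - aq w * bp + ap w * bq) \<in> fm_eliminate w S"
    using p q unfolding fm_eliminate_def by auto
  then have "- aq w * bp + ap w * bq \<le> (\<Sum>v\<in>V. (- aq w * ap v + ap w * aq v) * x v)"
    using x by auto
  also have "\<dots> = - aq w * (\<Sum>v\<in>V. ap v * x v) + ap w * (\<Sum>v\<in>V. aq v * x v)"
    by (simp add: sum_distrib_left sum.distrib[symmetric] algebra_simps)
  finally have "- aq w * (bp - (\<Sum>v\<in>V. ap v * x v)) + ap w * (bq - (\<Sum>v\<in>V. aq v * x v)) \<le> 0"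
    by (simp add: algebra_simps)
  then show ?thesis using p(2) q(2) by (simp add: field_simps)
qed

text \<open>A solution of the eliminated system extends: the value at \<open>w\<close> is squeezed between the
  lower bounds coming from \<open>a w > 0\<close> and the upper bounds coming from \<open>a w < 0\<close>.\<close>

lemma fm_eliminate_solution_extends:
  fixes S :: "('k \<times> ('v \<Rightarrow> real) \<times> real) set"
  assumes "finite S" "finite V" "w \<notin> V"
    and x: "\<forall>(k, a, b) \<in> fm_eliminate w S. b \<le> (\<Sum>v\<in>V. a v * x v)"
  shows "\<exists>x'. \<forall>(k, a, b) \<in> S. b \<le> (\<Sum>v\<in>insert w V. a v * x' v)"
proof -
  define P where "P = {s\<in>S. fst (snd s) w > 0}"
  define N where "N = {s\<in>S. fst (snd s) w < 0}"
  define bound where "bound s = (snd (snd s) - (\<Sum>v\<in>V. fst (snd s) v * x v)) / fst (snd s) w"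
    for s :: "'k \<times> ('v \<Rightarrow> real) \<times> real"
  define t where "t = (if P = {} then if N = {} then 0 else Min (bound ` N) else Max (bound ` P))"
  have fin: "finite P" "finite N" using assms(1) by (auto simp: P_def N_def)
  have "bound p \<le> bound q" if "p \<in> P" "q \<in> N" for p q
  proof -
    obtain k ap bp k' aq bq where "p = (k, ap, bp)" "q = (k', aq, bq)" by (cases p, cases q)
    then show ?thesis
      using that by (auto simp: P_def N_def bound_def intro: fm_eliminate_bounds_ordered[OF x])
  qed
  then have t_le: "t \<le> bound q" if "q \<in> N" for q
    using fin that by (auto simp: t_def Max_le_iff)
  have t_ge: "bound p \<le> t" if "p \<in> P" for p
    using fin that by (auto simp: t_def)
  have sum_upd: "(\<Sum>v\<in>insert w V. a v * (x(w := t)) v) = a w * t + (\<Sum>v\<in>V. a v * x v)" for a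
    using assms(2,3) by (auto intro!: sum.cong)
  have "b - (\<Sum>v\<in>V. a v * x v) \<le> a w * t" if "(k, a, b) \<in> S" for k a b
  proof -
    consider "a w = 0" | "a w > 0" | "a w < 0" by linarith
    then show ?thesis
    proof cases
      case 1
      then have "(k, a, b) \<in> fm_eliminate w S" using that by (auto simp: fm_eliminate_def)
      then show ?thesis using x 1 by auto
    next
      case 2
      then show ?thesis
        using t_ge[of "(k, a, b)"] that by (simp add: P_def bound_def divide_le_eq mult.commute)
    next
      case 3
      then show ?thesis
        using t_le[of "(k, a, b)"] that by (simp add: N_def bound_def le_divide_eq mult.commute)
    qed
  qed
  then show ?thesis by (intro exI[of _ "x(w := t)"]) (force simp only: sum_upd)
qed

lemma fourier_motzkin:
  fixes S :: "('k \<times> ('v \<Rightarrow> real) \<times> real) set"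
  assumes "finite V" "finite S"
  shows "(\<exists>x. \<forall>(k, a, b)\<in>S. b \<le> (\<Sum>v\<in>V. a v * x v)) \<or>
         (\<exists>a b. nonneg_comb S a b \<and> (\<forall>v\<in>V. a v = 0) \<and> b > 0)"
  using assms
proof (induction V arbitrary: S rule: finite_induct)
  case empty
  show ?case
  proof (cases "\<forall>(k, a, b)\<in>S. b \<le> 0")
    case False
    then obtain k a b where "(k, a, b) \<in> S" "b > 0" by auto
    then show ?thesis using nonneg_comb_member[of k a b S] by auto
  qed auto
next
  case (insert w V)
  from insert.IH[OF finite_fm_eliminate[OF insert.prems]] show ?case
  proof
    assume "\<exists>a b. nonneg_comb (fm_eliminate w S) a b \<and> (\<forall>v\<in>V. a v = 0) \<and> b > 0"
    then obtain a b where "nonneg_comb (fm_eliminate w S) a b" "\<forall>v\<in>V. a v = 0" "b > 0"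
      by blast
    then show ?thesis using nonneg_comb_fm_eliminate[of w S a b] by auto
  next
    assume "\<exists>x. \<forall>(k, a, b)\<in>fm_eliminate w S. b \<le> (\<Sum>v\<in>V. a v * x v)"
    then show ?thesis using fm_eliminate_solution_extends[OF insert.prems insert.hyps(1,2)] by blast
  qed
qed

lemma farkas_lemma:
  fixes a :: "'k \<Rightarrow> 'v \<Rightarrow> real" and b :: "'k \<Rightarrow> real"
  assumes "finite K" "finite V"
  shows "(\<exists>x. \<forall>k\<in>K. b k \<le> (\<Sum>v\<in>V. a k v * x v)) \<or>
    (\<exists>l. (\<forall>k\<in>K. l k \<ge> 0) \<and> (\<forall>v\<in>V. (\<Sum>k\<in>K. l k * a k v) = 0) \<and> (\<Sum>k\<in>K. l k * b k) > 0)"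
proof -
  define S where "S = (\<lambda>k. (k, a k, b k)) ` K"
  have inj: "inj_on (\<lambda>k. (k, a k, b k)) K" by (auto intro: inj_onI)
  have "finite S" using assms(1) by (simp add: S_def)
  from fourier_motzkin[OF assms(2) this] show ?thesis
  proof
    assume "\<exists>c d. nonneg_comb S c d \<and> (\<forall>v\<in>V. c v = 0) \<and> d > 0"
    then obtain c d l where "\<forall>v\<in>V. c v = 0" "d > 0" "\<forall>s\<in>S. l s \<ge> 0"
      "\<forall>v. c v = (\<Sum>s\<in>S. l s * fst (snd s) v)" "d = (\<Sum>s\<in>S. l s * snd (snd s))"
      using nonneg_comb_coefficients[of S] assms(1) unfolding S_def by blast
    then show ?thesis
      by (intro disjI2 exI[of _ "\<lambda>k. l (k, a k, b k)"]) (auto simp: S_def sum.reindex[OF inj])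
  qed (auto simp: S_def)
qed

lemma index_mult_mat_sum:
  assumes "X \<in> carrier_mat p m" "Y \<in> carrier_mat m q" "i < p" "j < q"
  shows "(X * Y) $$ (i, j) = (\<Sum>k<m. X $$ (i, k) * Y $$ (k, j))"
  using assms by (auto simp: scalar_prod_def atLeast0LessThan intro!: sum.cong)

lemma index_mult_mat_vec_sum:
  assumes "X \<in> carrier_mat p m" "x \<in> carrier_vec m" "i < p"
  shows "(X *\<^sub>v x) $ i = (\<Sum>k<m. X $$ (i, k) * x $ k)"
  using assms by (auto simp: scalar_prod_def atLeast0LessThan intro!: sum.cong)

lemma symmetric_mat_index:
  assumes "A \<in> carrier_mat n n" "transpose_mat A = A" "i < n" "j < n"
  shows "A $$ (j, i) = A $$ (i, j)"
  using assms by (metis index_transpose_mat(1) carrier_matD)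

lemma nonneg_mat_mult:
  "X \<in> carrier_mat p m \<Longrightarrow> Y \<in> carrier_mat m q \<Longrightarrow> nonneg_mat X \<Longrightarrow> nonneg_mat Y \<Longrightarrow>
    nonneg_mat (X * Y)"
  unfolding nonneg_mat_def by (auto simp: scalar_prod_def intro!: sum_nonneg)

lemma nonneg_mat_transpose: "nonneg_mat X \<Longrightarrow> nonneg_mat (transpose_mat X)"
  unfolding nonneg_mat_def by auto

lemma outer_carrier: "v \<in> carrier_vec r \<Longrightarrow> outer v \<in> carrier_mat r r"
  by (simp add: outer_def)

lemma outer_index: "i < dim_vec v \<Longrightarrow> j < dim_vec v \<Longrightarrow> outer v $$ (i, j) = v $ i * v $ j"
  by (simp add: outer_def)

lemma transpose_outer: "transpose_mat (outer v) = outer v"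
  by (rule eq_matI) (auto simp: outer_def)

lemma mult_outer_transpose:
  assumes B: "B \<in> carrier_mat n r" and v: "v \<in> carrier_vec r"
  shows "B * outer v * transpose_mat B = outer (B *\<^sub>v v)"
proof (rule eq_matI)
  fix i j assume "i < dim_row (outer (B *\<^sub>v v))" "j < dim_col (outer (B *\<^sub>v v))"
  then have ij: "i < n" "j < n" using B by (auto simp: outer_def)
  have V: "outer v \<in> carrier_mat r r" using v by (rule outer_carrier)
  have Bv: "(B *\<^sub>v v) $ i = (\<Sum>l<r. B $$ (i, l) * v $ l)" if "i < n" for i
    using index_mult_mat_vec_sum[OF B v that] .
  have BV: "(B * outer v) $$ (i, k) = (B *\<^sub>v v) $ i * v $ k" if "k < r" for k
    using v that
    by (simp add: index_mult_mat_sum[OF B V ij(1) that] Bv[OF ij(1)] outer_index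
        sum_distrib_right mult.assoc)
  have "(B * outer v * transpose_mat B) $$ (i, j) =
      (\<Sum>k<r. (B * outer v) $$ (i, k) * transpose_mat B $$ (k, j))"
    by (rule index_mult_mat_sum) (use B V ij in auto)
  also have "\<dots> = (\<Sum>k<r. (B *\<^sub>v v) $ i * v $ k * B $$ (j, k))"
    using B ij BV by (intro sum.cong) auto
  also have "\<dots> = (B *\<^sub>v v) $ i * (B *\<^sub>v v) $ j"
    by (simp add: Bv[OF ij(2)] sum_distrib_left mult_ac)
  finally show "(B * outer v * transpose_mat B) $$ (i, j) = outer (B *\<^sub>v v) $$ (i, j)"
    using ij B by (simp add: outer_def)
qed (use B in \<open>auto simp: outer_def\<close>)

lemma mult_minus_smult_mat:
  fixes A E F :: "'a::comm_ring mat"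
  assumes "A \<in> carrier_mat p m" "E \<in> carrier_mat m q" "F \<in> carrier_mat m q"
  shows "A * (E - c \<cdot>\<^sub>m F) = A * E - c \<cdot>\<^sub>m (A * F)"
  using assms by (simp add: mult_minus_distrib_mat[of _ p m] mult_smult_distrib)

lemma minus_smult_mult_mat:
  fixes A E F :: "'a::comm_ring mat"
  assumes "E \<in> carrier_mat p m" "F \<in> carrier_mat p m" "A \<in> carrier_mat m q"
  shows "(E - c \<cdot>\<^sub>m F) * A = E * A - c \<cdot>\<^sub>m (F * A)"
  using assms by (simp add: minus_mult_distrib_mat[of _ p m] mult_smult_assoc_mat)

lemma smult_smult_mat: "a \<cdot>\<^sub>m (b \<cdot>\<^sub>m A) = (a * b :: 'a::semigroup_mult) \<cdot>\<^sub>m A"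
  by (rule eq_matI) (auto simp: mult.assoc)

lemma transpose_congruence:
  fixes P X :: "'a::comm_semiring_0 mat"
  assumes P: "P \<in> carrier_mat n r" and X: "X \<in> carrier_mat r r" and sym: "transpose_mat X = X"
  shows "transpose_mat (P * X * transpose_mat P) = P * X * transpose_mat P"
proof -
  have "transpose_mat (P * X * transpose_mat P) = transpose_mat (transpose_mat P) * transpose_mat (P * X)"
    by (rule transpose_mult) (use P X in auto)
  also have "transpose_mat (P * X) = transpose_mat X * transpose_mat P"
    by (rule transpose_mult) (use P X in auto)
  finally show ?thesis using P X sym by simp
qed

lemma congruence_cancel:
  fixes B M P X :: "'a::comm_semiring_1 mat"
  assumes B: "B \<in> carrier_mat n r" and M: "M \<in> carrier_mat r r" and P: "P \<in> carrier_mat r r"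
    and X: "X \<in> carrier_mat r r" and MP: "M * P = 1\<^sub>m r"
  shows "(B * M) * (P * X * transpose_mat P) * transpose_mat (B * M) = B * X * transpose_mat B"
proof -
  have PtMt: "transpose_mat P * transpose_mat M = 1\<^sub>m r"
    using MP M P by (metis transpose_mult transpose_one)
  have MPZ: "M * (P * Z) = Z" if "Z \<in> carrier_mat r q" for Z q
    using that M P MP by (simp add: assoc_mult_mat[symmetric, of M r r P r Z q])
  have PtMtZ: "transpose_mat P * (transpose_mat M * Z) = Z" if "Z \<in> carrier_mat r q" for Z q
    using that M P PtMt
    by (simp add: assoc_mult_mat[symmetric, of "transpose_mat P" r r "transpose_mat M" r Z q])
  have "B * M * (P * X * transpose_mat P) = B * (M * (P * (X * transpose_mat P)))"
    using B M P X by (simp add: assoc_mult_mat[of B n r M r _ r] assoc_mult_mat[of P r r X r _ r])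
  also have "M * (P * (X * transpose_mat P)) = X * transpose_mat P"
    using P X by (intro MPZ[of _ r]) simp
  finally have left: "B * M * (P * X * transpose_mat P) = B * (X * transpose_mat P)" .
  have "B * (X * transpose_mat P) * (transpose_mat M * transpose_mat B) =
      B * (X * (transpose_mat P * (transpose_mat M * transpose_mat B)))"
    using B M P X by (simp add: assoc_mult_mat[of B n r _ r _ n] assoc_mult_mat[of X r r _ r _ n])
  also have "transpose_mat P * (transpose_mat M * transpose_mat B) = transpose_mat B"
    using B by (intro PtMtZ[of _ n]) simp
  finally show ?thesis
    unfolding transpose_mult[OF B M] left using B X by (simp add: assoc_mult_mat[of B n r X r _ n])
qed

lemma (in vec_space) rank_mult_le:
  assumes X: "X \<in> carrier_mat n m" and Y: "Y \<in> carrier_mat m p"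
  shows "rank (X * Y) \<le> rank X"
proof -
  have XY: "X * Y \<in> carrier_mat n p" using X Y by auto
  have dimX: "set (cols X) \<subseteq> carrier_vec n" and dimXY: "set (cols (X * Y)) \<subseteq> carrier_vec n"
    using X XY by (metis cols_dim carrier_matD(1))+
  have "set (cols (X * Y)) \<subseteq> span (set (cols X))"
  proof
    fix x assume "x \<in> set (cols (X * Y))"
    then obtain j where j: "j < p" "x = col (X * Y) j" using X Y
      by (metis cols_length cols_nth in_set_conv_nth index_mult_mat(3) carrier_matD(2))
    have "x = X *\<^sub>v col Y j" using j col_mult2[OF X Y j(1)] by simp
    also have "X = mat_of_cols n (cols X)" using X by (metis mat_of_cols_cols carrier_matD(1))
    also have "col Y j = vec (length (cols X)) (\<lambda>i. col Y j $ i)" using X Y by auto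
    finally have "x = lincomb_list (\<lambda>i. col Y j $ i) (cols X)"
      using lincomb_list_as_mat_mult[of "cols X"] dimX by (simp add: subset_code(1))
    also have "\<dots> \<in> span (set (cols X))"
      using span_list_as_span[OF dimX] unfolding span_list_def by auto
    finally show "x \<in> span (set (cols X))" .
  qed
  then have inc: "span (set (cols (X * Y))) \<subseteq> span (set (cols X))"
    by (rule span_subsetI[OF dimX])
  have sX: "subspace class_ring (span (set (cols X))) V"
    using dimX by (rule span_is_subspace)
  have sXY: "subspace class_ring (span (set (cols (X * Y)))) V"
    using dimXY by (rule span_is_subspace)
  show ?thesis unfolding rank_def
    using vectorspace.subspace_dim[OF subspace_is_vs[OF sX] nested_subspaces[OF sX sXY inc]
        fin_dim_span_cols[OF X]] fin_dim_span_cols[OF XY] by auto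
qed

lemma mrank_mult_le:
  "X \<in> carrier_mat n m \<Longrightarrow> Y \<in> carrier_mat m p \<Longrightarrow> mrank (X * Y) \<le> mrank X"
  unfolding mrank_def by (simp add: vec_space.rank_mult_le)

lemma mrank_le_dim_col: "X \<in> carrier_mat n m \<Longrightarrow> mrank X \<le> m"
  unfolding mrank_def by (simp add: vec_space.rank_le_nc)

section \<open>Trace and spectral radius\<close>

definition mat_trace :: "'a::comm_ring_1 mat \<Rightarrow> 'a" where
  "mat_trace M = (\<Sum>i<dim_row M. M $$ (i, i))"

lemma mat_trace_mult:
  "X \<in> carrier_mat n m \<Longrightarrow> Y \<in> carrier_mat m n \<Longrightarrow>
    mat_trace (X * Y) = (\<Sum>i<n. \<Sum>k<m. X $$ (i, k) * Y $$ (k, i))"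
  unfolding mat_trace_def by (auto simp: scalar_prod_def atLeast0LessThan intro!: sum.cong)

lemma mat_trace_mult_comm:
  "X \<in> carrier_mat n m \<Longrightarrow> Y \<in> carrier_mat m n \<Longrightarrow> mat_trace (X * Y) = mat_trace (Y * X)"
  unfolding mat_trace_mult[of X n m Y] mat_trace_mult[of Y m n X] by (subst sum.swap) (simp add: mult.commute)

lemma mat_trace_similar:
  assumes "P \<in> carrier_mat n n" "T \<in> carrier_mat n n" "Q \<in> carrier_mat n n" "Q * P = 1\<^sub>m n"
  shows "mat_trace (P * T * Q) = mat_trace T"
proof -
  have "mat_trace (P * T * Q) = mat_trace (P * (T * Q))"
    using assms by (simp add: assoc_mult_mat[of _ n n _ n _ n])
  also have "\<dots> = mat_trace (T * Q * P)"
    using assms by (intro mat_trace_mult_comm[of _ n n]) auto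
  also have "T * Q * P = T"
    using assms by (simp add: assoc_mult_mat[of _ n n _ n _ n])
  finally show ?thesis .
qed

lemma mat_trace_square_strictly_upper_triangular:
  assumes T: "T \<in> carrier_mat n n" "upper_triangular T" and diag: "\<And>i. i < n \<Longrightarrow> T $$ (i, i) = 0"
  shows "mat_trace (T * T) = 0"
proof -
  have "T $$ (i, k) * T $$ (k, i) = 0" if "i < n" "k < n" for i k
    using T diag[of i] that by (cases i k rule: linorder_cases) (auto simp: upper_triangularD)
  then show ?thesis by (simp add: mat_trace_mult[OF T(1) T(1)])
qed

lemma mat_trace_square_symmetric:
  fixes A :: "real mat"
  assumes "A \<in> carrier_mat n n" "transpose_mat A = A"
  shows "mat_trace (A * A) = (\<Sum>i<n. \<Sum>k<n. (A $$ (i, k))\<^sup>2)"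
  unfolding mat_trace_mult[OF assms(1,1)]
  by (intro sum.cong refl) (simp add: symmetric_mat_index[OF assms] power2_eq_square)

text \<open>If the spectral radius vanished, a Schur form \<open>T\<close> of \<open>A\<close> would have zero diagonal, so
  \<open>tr (A\<^sup>2) = tr (T\<^sup>2) = 0\<close>; for symmetric \<open>A\<close> this trace is the sum of the squared entries.\<close>

lemma spectral_radius_pos_symmetric:
  fixes A :: "real mat"
  assumes A: "A \<in> carrier_mat n n" and sym: "transpose_mat A = A" and nz: "A \<noteq> 0\<^sub>m n n"
  shows "spectral_radius (map_mat complex_of_real A) > 0"
proof (rule ccontr)
  define Ac where "Ac = map_mat complex_of_real A"
  assume "\<not> spectral_radius Ac > 0"
  then have sr: "spectral_radius Ac \<le> 0" unfolding Ac_def by simp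
  have Ac: "Ac \<in> carrier_mat n n" using A by (simp add: Ac_def)
  obtain i0 k0 where ik: "i0 < n" "k0 < n" "A $$ (i0, k0) \<noteq> 0"
    using nz A by (metis eq_matI carrier_matD index_zero_mat(1,2,3))
  obtain es where cp: "char_poly Ac = (\<Prod>a\<leftarrow>es. [:- a, 1:])"
    using char_poly_factorized[OF Ac] by auto
  obtain T P Q where "schur_decomposition Ac es = (T, P, Q)"
    by (cases "schur_decomposition Ac es") auto
  from schur_decomposition[OF Ac cp this]
  have sim: "similar_mat_wit Ac T P Q" and ut: "upper_triangular T" and dg: "diag_mat T = es"
    by auto
  note PTQ = similar_mat_witD2[OF Ac sim]
  have "T $$ (i, i) = 0" if "i < n" for i
  proof -
    have "T $$ (i, i) \<in> set es" using that PTQ dg by (auto simp: diag_mat_def)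
    then have "poly (char_poly Ac) (T $$ (i, i)) = 0" unfolding cp by (rule linear_poly_root)
    then have "norm (T $$ (i, i)) \<le> spectral_radius Ac"
      using spectrum_root_char_poly[OF Ac] spectral_radius_mem_max(2)[OF Ac] that by auto
    then show ?thesis using sr by (metis norm_le_zero_iff order_trans)
  qed
  then have "mat_trace (T * T) = 0"
    using mat_trace_square_strictly_upper_triangular PTQ ut by blast
  moreover have "Ac * Ac = P * (T * T) * Q"
    using similar_mat_wit_pow_id[OF sim, of 2] Ac PTQ by (simp add: numeral_2_eq_2)
  ultimately have "mat_trace (Ac * Ac) = 0"
    using mat_trace_similar[of P n "T * T" Q] PTQ by auto
  moreover have "mat_trace (Ac * Ac) = complex_of_real (mat_trace (A * A))"
    using A by (simp add: Ac_def mat_trace_mult)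
  ultimately have "mat_trace (A * A) = 0" by (metis of_real_eq_0_iff)
  then have "(\<Sum>i<n. \<Sum>k<n. (A $$ (i, k))\<^sup>2) = 0"
    using mat_trace_square_symmetric[OF A sym] by simp
  moreover have "(\<Sum>i<n. \<Sum>k<n. (A $$ (i, k))\<^sup>2) > 0"
    using ik by (intro sum_pos2[of _ i0] sum_pos2[of _ k0]) (auto intro: sum_nonneg)
  ultimately show False by simp
qed

section \<open>Perturbing a nonnegative factorization\<close>

lemma eventually_quadratic_perturbation_nonneg:
  fixes x g H :: real
  assumes x: "0 \<le> x" and g: "x = 0 \<Longrightarrow> 0 < g"
  shows "\<forall>\<^sub>F \<alpha> in at_right 0. \<forall>h. \<bar>h\<bar> \<le> H \<longrightarrow> 0 \<le> x + \<alpha> * g + \<alpha>\<^sup>2 * h"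
proof -
  define K where "K = \<bar>g\<bar> + \<bar>H\<bar> + 1"
  define b where "b = (if x = 0 then g / K else min 1 (x / K))"
  have K: "K > 0" by (simp add: K_def add_nonneg_pos)
  have "b > 0"
    using x g K by (cases "x = 0") (simp_all add: b_def)
  then have "\<forall>\<^sub>F \<alpha> in at_right 0. \<alpha> \<in> {0<..<b}" by (rule eventually_at_right_real)
  then show ?thesis
  proof (rule eventually_mono, intro allI impI)
    fix \<alpha> h :: real assume "\<alpha> \<in> {0<..<b}" and h: "\<bar>h\<bar> \<le> H"
    then have \<alpha>: "0 < \<alpha>" "\<alpha> < b" by auto
    have \<alpha>K: "\<alpha> * K < (if x = 0 then g else x)"
      using \<alpha>(2) K by (cases "x = 0") (simp_all add: b_def pos_less_divide_eq)
    have \<alpha>h: "\<alpha> * \<bar>h\<bar> \<le> \<alpha> * \<bar>H\<bar>" using \<alpha> h by (intro mult_left_mono) auto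
    have "\<bar>\<alpha>\<^sup>2 * h\<bar> = \<alpha> * (\<alpha> * \<bar>h\<bar>)" by (simp add: abs_mult power2_eq_square)
    then have quad: "- (\<alpha> * (\<alpha> * \<bar>h\<bar>)) \<le> \<alpha>\<^sup>2 * h"
      using abs_ge_minus_self[of "\<alpha>\<^sup>2 * h"] by linarith
    show "0 \<le> x + \<alpha> * g + \<alpha>\<^sup>2 * h"
    proof (cases "x = 0")
      case True
      have "\<alpha> * \<bar>H\<bar> \<le> \<alpha> * K" using \<alpha> by (intro mult_left_mono) (auto simp: K_def)
      moreover have "\<alpha> * K \<le> g" using \<alpha>K True by simp
      ultimately have "\<alpha> * \<bar>h\<bar> \<le> g" using \<alpha>h by linarith
      then have "\<alpha> * (\<alpha> * \<bar>h\<bar>) \<le> \<alpha> * g" using \<alpha> by (intro mult_left_mono) auto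
      then show ?thesis using True quad by linarith
    next
      case False
      have "\<alpha> \<le> 1" using \<alpha> False by (simp add: b_def)
      then have "\<alpha> * (\<alpha> * \<bar>h\<bar>) \<le> \<alpha> * \<bar>h\<bar>"
        using \<alpha> mult_right_mono[of \<alpha> 1 "\<alpha> * \<bar>h\<bar>"] by simp
      moreover have "- (\<alpha> * \<bar>g\<bar>) \<le> \<alpha> * g"
        using \<alpha> mult_left_mono[of "- \<bar>g\<bar>" g \<alpha>] by simp
      moreover have "\<alpha> * \<bar>g\<bar> + \<alpha> * \<bar>h\<bar> \<le> \<alpha> * K"
        unfolding K_def distrib_left mult_1_right using \<alpha>h \<alpha> by linarith
      moreover have "\<alpha> * K \<le> x" using \<alpha>K False by simp
      ultimately show ?thesis using quad by linarith
    qed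
  qed
qed

definition mat_bound :: "real mat \<Rightarrow> real \<Rightarrow> bool" where
  "mat_bound X c \<longleftrightarrow> (\<forall>i<dim_row X. \<forall>j<dim_col X. \<bar>X $$ (i, j)\<bar> \<le> c)"

lemma mat_boundD: "mat_bound X c \<Longrightarrow> i < dim_row X \<Longrightarrow> j < dim_col X \<Longrightarrow> \<bar>X $$ (i, j)\<bar> \<le> c"
  unfolding mat_bound_def by auto

lemma mat_bound_exists: "\<exists>c\<ge>0. mat_bound X c"
proof -
  let ?S = "(\<lambda>(i, j). \<bar>X $$ (i, j)\<bar>) ` ({..<dim_row X} \<times> {..<dim_col X})"
  show ?thesis
    by (rule exI[of _ "Max (insert 0 ?S)"]) (auto simp: mat_bound_def intro!: Max_ge)
qed

lemma abs_sum_prod_le: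
  fixes f g :: "nat \<Rightarrow> real"
  assumes "\<And>k. k < m \<Longrightarrow> \<bar>f k\<bar> \<le> a" "\<And>k. k < m \<Longrightarrow> \<bar>g k\<bar> \<le> b"
  shows "\<bar>\<Sum>k<m. f k * g k\<bar> \<le> real m * (a * b)"
proof -
  have "\<bar>\<Sum>k<m. f k * g k\<bar> \<le> (\<Sum>k<m. \<bar>f k * g k\<bar>)" by (rule sum_abs)
  also have "\<dots> \<le> (\<Sum>k<m. a * b)"
  proof (rule sum_mono)
    fix k assume "k \<in> {..<m}"
    then show "\<bar>f k * g k\<bar> \<le> a * b"
      using assms[of k] by (simp add: abs_mult mult_mono')
  qed
  finally show ?thesis by simp
qed

lemma mat_bound_mult:
  assumes "X \<in> carrier_mat p m" "Y \<in> carrier_mat m q" "mat_bound X a" "mat_bound Y b"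
  shows "mat_bound (X * Y) (real m * (a * b))"
  unfolding mat_bound_def
proof (intro allI impI)
  fix i j assume "i < dim_row (X * Y)" "j < dim_col (X * Y)"
  then have ij: "i < p" "j < q" using assms(1,2) by auto
  show "\<bar>(X * Y) $$ (i, j)\<bar> \<le> real m * (a * b)"
    unfolding index_mult_mat_sum[OF assms(1,2) ij]
    using assms(1,2) ij
    by (intro abs_sum_prod_le) (auto intro: mat_boundD[OF assms(3)] mat_boundD[OF assms(4)])
qed

lemma max_half_bound:
  fixes f :: "'i \<Rightarrow> real"
  assumes "finite I" "\<And>i. i \<in> I \<Longrightarrow> f i \<le> c + Max (f ` I) / 2" "i \<in> I"
  shows "f i \<le> 2 * c"
proof -
  have "Max (f ` I) \<in> f ` I" using assms(1,3) by (intro Max_in) auto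
  then obtain j where j: "j \<in> I" "f j = Max (f ` I)" by auto
  have "f i \<le> Max (f ` I)" using assms(1,3) by simp
  then show ?thesis using assms(2)[OF j(1)] j(2) by linarith
qed

lemma near_identity_solution_bound:
  assumes D: "D \<in> carrier_mat r r" and d: "mat_bound D d"
    and a: "0 \<le> a" and small: "a * (real r * d) \<le> 1/2"
    and x: "x \<in> carrier_vec r" and rhs: "\<And>i. i < r \<Longrightarrow> \<bar>((1\<^sub>m r + a \<cdot>\<^sub>m D) *\<^sub>v x) $ i\<bar> \<le> c"
    and i: "i < r"
  shows "\<bar>x $ i\<bar> \<le> 2 * c"
proof -
  let ?f = "\<lambda>k. \<bar>x $ k\<bar>"
  have "?f i \<le> c + Max (?f ` {..<r}) / 2" if i: "i \<in> {..<r}" for i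
  proof -
    let ?Dx = "\<Sum>k<r. D $$ (i, k) * x $ k"
    have "((1\<^sub>m r + a \<cdot>\<^sub>m D) *\<^sub>v x) $ i = x $ i + a * ?Dx"
      using i x D
      by (auto simp: scalar_prod_def atLeast0LessThan sum.distrib distrib_right sum_distrib_left
          add_mult_distrib_mat_vec[of _ r r] mult.assoc intro!: sum.cong)
    then have "\<bar>x $ i\<bar> \<le> \<bar>((1\<^sub>m r + a \<cdot>\<^sub>m D) *\<^sub>v x) $ i\<bar> + \<bar>a * ?Dx\<bar>"
      by (metis abs_triangle_ineq4 add_diff_cancel_right')
    also have "\<dots> \<le> c + a * (real r * (d * Max (?f ` {..<r})))"
    proof (rule add_mono)
      show "\<bar>((1\<^sub>m r + a \<cdot>\<^sub>m D) *\<^sub>v x) $ i\<bar> \<le> c" using rhs i by simp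
      have "\<bar>?Dx\<bar> \<le> real r * (d * Max (?f ` {..<r}))"
        using i D by (intro abs_sum_prod_le) (auto intro: mat_boundD[OF d] Max_ge)
      then show "\<bar>a * ?Dx\<bar> \<le> a * (real r * (d * Max (?f ` {..<r})))"
        using a by (simp add: abs_mult mult_left_mono)
    qed
    also have "\<dots> \<le> c + Max (?f ` {..<r}) / 2"
    proof -
      have "0 \<le> Max (?f ` {..<r})"
        using i by (intro order.trans[OF abs_ge_zero[of "x $ i"] Max_ge]) auto
      then have "a * (real r * d) * Max (?f ` {..<r}) \<le> Max (?f ` {..<r}) / 2"
        using mult_right_mono[OF small] by simp
      then show ?thesis by (simp add: mult_ac)
    qed
    finally show ?thesis .
  qed
  then show ?thesis using max_half_bound[of "{..<r}" ?f c] i by simp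
qed

lemma inverse_near_identity_bounded:
  assumes D: "D \<in> carrier_mat r r" and d: "mat_bound D d"
    and a: "0 \<le> a" and small: "a * (real r * d) \<le> 1/2"
  shows "\<exists>M \<in> carrier_mat r r. M * (1\<^sub>m r + a \<cdot>\<^sub>m D) = 1\<^sub>m r \<and> (1\<^sub>m r + a \<cdot>\<^sub>m D) * M = 1\<^sub>m r \<and>
    mat_bound M 2"
proof -
  define P where "P = 1\<^sub>m r + a \<cdot>\<^sub>m D"
  have P: "P \<in> carrier_mat r r" using D by (simp add: P_def)
  note bound = near_identity_solution_bound[OF D d a small, folded P_def]
  have "x = 0\<^sub>v r" if x: "x \<in> carrier_vec r" "P *\<^sub>v x = 0\<^sub>v r" for x
    using bound[OF x(1), of 0] x by (intro eq_vecI) auto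
  then have "det P \<noteq> 0" unfolding det_0_iff_vec_prod_zero[OF P] by blast
  from det_non_zero_imp_unit[OF P this, of "()"]
  obtain M where M: "M \<in> carrier_mat r r" "M * P = 1\<^sub>m r" "P * M = 1\<^sub>m r"
    unfolding Units_def ring_mat_simps by auto
  have "\<bar>M $$ (i, j)\<bar> \<le> 2" if ij: "i < r" "j < r" for i j
  proof -
    have "P *\<^sub>v col M j = col (1\<^sub>m r) j" using col_mult2[OF P M(1) ij(2)] M(3) by simp
    then have "\<bar>(P *\<^sub>v col M j) $ k\<bar> \<le> 1" if "k < r" for k
      using that ij by simp
    then show ?thesis using bound[of "col M j" 1 i] M(1) ij by simp
  qed
  then have "mat_bound M 2" using M(1) by (simp add: mat_bound_def)
  show ?thesis
  proof (rule bexI[OF _ M(1)], intro conjI)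
    show "M * (1\<^sub>m r + a \<cdot>\<^sub>m D) = 1\<^sub>m r" "(1\<^sub>m r + a \<cdot>\<^sub>m D) * M = 1\<^sub>m r"
      using M(2,3) unfolding P_def .
  qed fact
qed

lemma eventually_inverse_near_identity_bounded:
  assumes D: "D \<in> carrier_mat r r"
  shows "\<forall>\<^sub>F \<alpha> in at_right 0. \<exists>M \<in> carrier_mat r r. M * (1\<^sub>m r + \<alpha> \<cdot>\<^sub>m D) = 1\<^sub>m r \<and>
    (1\<^sub>m r + \<alpha> \<cdot>\<^sub>m D) * M = 1\<^sub>m r \<and> mat_bound M 2"
proof -
  obtain d where d: "d \<ge> 0" "mat_bound D d" using mat_bound_exists by blast
  have "0 \<le> real r * d" using d by simp
  then have pos: "0 < 2 * (real r * d + 1)" by simp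
  then have "0 < 1 / (2 * (real r * d + 1))" by simp
  from eventually_at_right_real[OF this] show ?thesis
  proof (rule eventually_mono)
    fix \<alpha> assume "\<alpha> \<in> {0<..<1 / (2 * (real r * d + 1))}"
    then have "0 < \<alpha>" "\<alpha> * (2 * (real r * d + 1)) < 1"
      using pos by (auto simp: less_divide_eq)
    then have "0 \<le> \<alpha>" "\<alpha> * (real r * d) \<le> 1/2"
      by (simp_all add: algebra_simps)
    then show "\<exists>M \<in> carrier_mat r r. M * (1\<^sub>m r + \<alpha> \<cdot>\<^sub>m D) = 1\<^sub>m r \<and>
        (1\<^sub>m r + \<alpha> \<cdot>\<^sub>m D) * M = 1\<^sub>m r \<and> mat_bound M 2"
      by (rule inverse_near_identity_bounded[OF D d(2)])
  qed
qed

lemma right_inverse_near_identity: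
  fixes D M :: "'a::comm_ring_1 mat"
  assumes D: "D \<in> carrier_mat r r" and M: "M \<in> carrier_mat r r"
    and inv: "(1\<^sub>m r + a \<cdot>\<^sub>m D) * M = 1\<^sub>m r"
  shows "M = 1\<^sub>m r - a \<cdot>\<^sub>m (D * M)"
proof (rule eq_matI)
  have sum: "M + a \<cdot>\<^sub>m (D * M) = 1\<^sub>m r"
    using inv D M by (simp add: add_mult_distrib_mat[of _ r r] mult_smult_assoc_mat)
  fix i j assume "i < dim_row (1\<^sub>m r - a \<cdot>\<^sub>m (D * M))" "j < dim_col (1\<^sub>m r - a \<cdot>\<^sub>m (D * M))"
  then have ij: "i < r" "j < r" using D M by auto
  have "(M + a \<cdot>\<^sub>m (D * M)) $$ (i, j) = 1\<^sub>m r $$ (i, j)" unfolding sum ..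
  then show "M $$ (i, j) = (1\<^sub>m r - a \<cdot>\<^sub>m (D * M)) $$ (i, j)"
    using ij D M by (simp add: eq_diff_eq)
qed (use D M in auto)

lemma congruence_near_identity_index:
  fixes D X :: "real mat"
  assumes D: "D \<in> carrier_mat r r" and X: "X \<in> carrier_mat r r" and ij: "i < r" "j < r"
  shows "((1\<^sub>m r + a \<cdot>\<^sub>m D) * X * transpose_mat (1\<^sub>m r + a \<cdot>\<^sub>m D)) $$ (i, j) =
    X $$ (i, j) + a * ((D * X) $$ (i, j) + (X * transpose_mat D) $$ (i, j)) +
    a\<^sup>2 * (D * X * transpose_mat D) $$ (i, j)"
proof -
  have t: "transpose_mat (1\<^sub>m r + a \<cdot>\<^sub>m D) = 1\<^sub>m r + a \<cdot>\<^sub>m transpose_mat D"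
    by (rule eq_matI) (use D in auto)
  have left: "(1\<^sub>m r + a \<cdot>\<^sub>m D) * X = X + a \<cdot>\<^sub>m (D * X)"
    using D X by (simp add: add_mult_distrib_mat[of _ r r] mult_smult_assoc_mat[of _ r r])
  have "(X + a \<cdot>\<^sub>m (D * X)) * (a \<cdot>\<^sub>m transpose_mat D) =
      a \<cdot>\<^sub>m (X * transpose_mat D) + (a * a) \<cdot>\<^sub>m (D * X * transpose_mat D)"
    using D X by (simp add: mult_smult_distrib[of _ r r] add_mult_distrib_mat[of _ r r]
        mult_smult_assoc_mat[of _ r r] add_smult_distrib_left_mat[of _ r r] smult_smult_mat)
  moreover have "(X + a \<cdot>\<^sub>m (D * X)) * (1\<^sub>m r + a \<cdot>\<^sub>m transpose_mat D) =
      (X + a \<cdot>\<^sub>m (D * X)) * 1\<^sub>m r + (X + a \<cdot>\<^sub>m (D * X)) * (a \<cdot>\<^sub>m transpose_mat D)"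
    by (rule mult_add_distrib_mat[of _ r r]) (use D X in auto)
  ultimately have right: "(X + a \<cdot>\<^sub>m (D * X)) * (1\<^sub>m r + a \<cdot>\<^sub>m transpose_mat D) =
      (X + a \<cdot>\<^sub>m (D * X)) + (a \<cdot>\<^sub>m (X * transpose_mat D) + (a * a) \<cdot>\<^sub>m (D * X * transpose_mat D))"
    using D X by simp
  show ?thesis
    unfolding t left right using D X ij by (simp add: algebra_simps power2_eq_square)
qed

lemma mult_right_inverse_near_identity:
  fixes B D M :: "'a::comm_ring_1 mat"
  assumes B: "B \<in> carrier_mat n r" and D: "D \<in> carrier_mat r r" and M: "M \<in> carrier_mat r r"
    and inv: "(1\<^sub>m r + a \<cdot>\<^sub>m D) * M = 1\<^sub>m r"
  shows "B * M = B - a \<cdot>\<^sub>m (B * D - a \<cdot>\<^sub>m (B * (D * (D * M))))"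
proof -
  note M_eq = right_inverse_near_identity[OF D M inv]
  have "D * M = D * (1\<^sub>m r - a \<cdot>\<^sub>m (D * M))" by (subst M_eq) simp
  also have "\<dots> = D - a \<cdot>\<^sub>m (D * (D * M))"
    using D M by (simp add: mult_minus_smult_mat[where q = r])
  finally have DM: "D * M = D - a \<cdot>\<^sub>m (D * (D * M))" .
  have "B * M = B * (1\<^sub>m r - a \<cdot>\<^sub>m (D * M))" by (subst M_eq) simp
  also have "\<dots> = B - a \<cdot>\<^sub>m (B * (D * M))"
    using B D M by (simp add: mult_minus_smult_mat[where q = r])
  also have "B * (D * M) = B * D - a \<cdot>\<^sub>m (B * (D * (D * M)))"
    using B D M by (subst DM) (simp add: mult_minus_smult_mat[where q = r])
  finally show ?thesis .
qed

lemma eventually_nonneg_mult_inverse: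
  fixes B D :: "real mat"
  assumes B: "B \<in> carrier_mat n r" and B_nonneg: "nonneg_mat B" and D: "D \<in> carrier_mat r r"
    and first_order: "\<And>i j. i < n \<Longrightarrow> j < r \<Longrightarrow> B $$ (i, j) = 0 \<Longrightarrow> (B * D) $$ (i, j) < 0"
  shows "\<forall>\<^sub>F \<alpha> in at_right 0. \<forall>M \<in> carrier_mat r r.
    (1\<^sub>m r + \<alpha> \<cdot>\<^sub>m D) * M = 1\<^sub>m r \<and> mat_bound M 2 \<longrightarrow> nonneg_mat (B * M)"
proof -
  obtain b d where b: "mat_bound B b" and d: "mat_bound D d"
    using mat_bound_exists by blast
  define H where "H = real r * (b * (real r * (d * (real r * (d * 2)))))"
  have entry: "\<forall>\<^sub>F \<alpha> in at_right 0. \<forall>M \<in> carrier_mat r r.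
      (1\<^sub>m r + \<alpha> \<cdot>\<^sub>m D) * M = 1\<^sub>m r \<and> mat_bound M 2 \<longrightarrow> 0 \<le> (B * M) $$ (i, j)"
    if ij: "i < n" "j < r" for i j
  proof -
    have "0 \<le> B $$ (i, j)" using B_nonneg B ij by (simp add: nonneg_mat_def)
    moreover have "0 < - (B * D) $$ (i, j)" if "B $$ (i, j) = 0"
      using first_order[OF ij that] by simp
    ultimately have "\<forall>\<^sub>F \<alpha> in at_right 0. \<forall>h. \<bar>h\<bar> \<le> H \<longrightarrow>
        0 \<le> B $$ (i, j) + \<alpha> * - (B * D) $$ (i, j) + \<alpha>\<^sup>2 * h"
      by (rule eventually_quadratic_perturbation_nonneg)
    then show ?thesis
    proof (rule eventually_mono, intro ballI impI)
      fix \<alpha> M assume nonneg: "\<forall>h. \<bar>h\<bar> \<le> H \<longrightarrow> 0 \<le> B $$ (i, j) + \<alpha> * - (B * D) $$ (i, j) + \<alpha>\<^sup>2 * h"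
        and M: "M \<in> carrier_mat r r" and inv: "(1\<^sub>m r + \<alpha> \<cdot>\<^sub>m D) * M = 1\<^sub>m r \<and> mat_bound M 2"
      have "mat_bound (B * (D * (D * M))) H"
        unfolding H_def using B D M
        by (intro mat_bound_mult[OF B] mat_bound_mult[OF D] b d inv[THEN conjunct2]) auto
      then have "\<bar>(B * (D * (D * M))) $$ (i, j)\<bar> \<le> H"
        using B D M ij by (intro mat_boundD) auto
      moreover have "(B * M) $$ (i, j) =
          B $$ (i, j) + \<alpha> * - (B * D) $$ (i, j) + \<alpha>\<^sup>2 * (B * (D * (D * M))) $$ (i, j)"
        unfolding mult_right_inverse_near_identity[OF B D M inv[THEN conjunct1]]
        using B D M ij by (simp add: algebra_simps power2_eq_square)
      ultimately show "0 \<le> (B * M) $$ (i, j)" using nonneg by auto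
    qed
  qed
  have "\<forall>\<^sub>F \<alpha> in at_right 0. \<forall>ij \<in> {..<n} \<times> {..<r}. \<forall>M \<in> carrier_mat r r.
      (1\<^sub>m r + \<alpha> \<cdot>\<^sub>m D) * M = 1\<^sub>m r \<and> mat_bound M 2 \<longrightarrow> 0 \<le> (B * M) $$ ij"
    using entry by (intro eventually_ball_finite) auto
  then show ?thesis
    by (rule eventually_mono) (use B in \<open>auto simp: nonneg_mat_def\<close>)
qed

lemma congruence_downdate_index:
  fixes C D V :: "real mat"
  assumes C: "C \<in> carrier_mat r r" and D: "D \<in> carrier_mat r r" and V: "V \<in> carrier_mat r r"
    and ij: "i < r" "j < r"
  shows "((1\<^sub>m r + \<alpha> \<cdot>\<^sub>m D) * (C - \<alpha> \<cdot>\<^sub>m V) * transpose_mat (1\<^sub>m r + \<alpha> \<cdot>\<^sub>m D)) $$ (i, j) =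
    C $$ (i, j) + \<alpha> * ((D * C) $$ (i, j) + (C * transpose_mat D) $$ (i, j) - V $$ (i, j)) +
    \<alpha>\<^sup>2 * ((D * C * transpose_mat D) $$ (i, j) - (D * V) $$ (i, j) - (V * transpose_mat D) $$ (i, j) -
      \<alpha> * (D * V * transpose_mat D) $$ (i, j))"
proof -
  have Dt: "transpose_mat D \<in> carrier_mat r r" using D by simp
  have X: "C - \<alpha> \<cdot>\<^sub>m V \<in> carrier_mat r r" using V by (simp add: minus_carrier_mat)
  have DX: "D * (C - \<alpha> \<cdot>\<^sub>m V) = D * C - \<alpha> \<cdot>\<^sub>m (D * V)"
    using D C V by (rule mult_minus_smult_mat)
  have XD: "(C - \<alpha> \<cdot>\<^sub>m V) * transpose_mat D = C * transpose_mat D - \<alpha> \<cdot>\<^sub>m (V * transpose_mat D)"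
    using C V Dt by (rule minus_smult_mult_mat)
  have DXD: "(D * C - \<alpha> \<cdot>\<^sub>m (D * V)) * transpose_mat D =
      D * C * transpose_mat D - \<alpha> \<cdot>\<^sub>m (D * V * transpose_mat D)"
    using C D V Dt by (intro minus_smult_mult_mat) auto
  show ?thesis
    using congruence_near_identity_index[OF D X ij, of \<alpha>] C D V ij unfolding DX XD DXD
    by (simp add: algebra_simps power2_eq_square del: index_mult_mat(1))
qed

lemma eventually_nonneg_congruence:
  fixes C D V :: "real mat"
  assumes C: "C \<in> carrier_mat r r" and C_nonneg: "nonneg_mat C" and D: "D \<in> carrier_mat r r"
    and V: "V \<in> carrier_mat r r"
    and first_order: "\<And>i j. i < r \<Longrightarrow> j < r \<Longrightarrow> C $$ (i, j) = 0 \<Longrightarrow>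
      V $$ (i, j) < (D * C + C * transpose_mat D) $$ (i, j)"
  shows "\<forall>\<^sub>F \<alpha> in at_right 0.
    nonneg_mat ((1\<^sub>m r + \<alpha> \<cdot>\<^sub>m D) * (C - \<alpha> \<cdot>\<^sub>m V) * transpose_mat (1\<^sub>m r + \<alpha> \<cdot>\<^sub>m D))"
proof -
  let ?C' = "\<lambda>\<alpha>. (1\<^sub>m r + \<alpha> \<cdot>\<^sub>m D) * (C - \<alpha> \<cdot>\<^sub>m V) * transpose_mat (1\<^sub>m r + \<alpha> \<cdot>\<^sub>m D)"
  have entry: "\<forall>\<^sub>F \<alpha> in at_right 0. 0 \<le> ?C' \<alpha> $$ (i, j)" if ij: "i < r" "j < r" for i j
  proof -
    define g where "g = (D * C) $$ (i, j) + (C * transpose_mat D) $$ (i, j) - V $$ (i, j)"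
    define h0 where "h0 = (D * C * transpose_mat D) $$ (i, j) - (D * V) $$ (i, j) - (V * transpose_mat D) $$ (i, j)"
    define h1 where "h1 = (D * V * transpose_mat D) $$ (i, j)"
    have expand: "?C' \<alpha> $$ (i, j) = C $$ (i, j) + \<alpha> * g + \<alpha>\<^sup>2 * (h0 - \<alpha> * h1)" for \<alpha>
      unfolding congruence_downdate_index[OF C D V ij] g_def h0_def h1_def ..
    have "0 \<le> C $$ (i, j)" using C_nonneg C ij by (simp add: nonneg_mat_def)
    moreover have "0 < g" if "C $$ (i, j) = 0"
      using first_order[OF ij that] C D ij by (simp add: g_def)
    ultimately have "\<forall>\<^sub>F \<alpha> in at_right 0. \<forall>h. \<bar>h\<bar> \<le> \<bar>h0\<bar> + \<bar>h1\<bar> \<longrightarrow>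
        0 \<le> C $$ (i, j) + \<alpha> * g + \<alpha>\<^sup>2 * h"
      by (rule eventually_quadratic_perturbation_nonneg)
    moreover have "\<forall>\<^sub>F \<alpha> in at_right 0. \<alpha> \<in> {0<..<1::real}"
      by (rule eventually_at_right_real) simp
    ultimately show ?thesis
    proof eventually_elim
      case (elim \<alpha>)
      have "\<bar>\<alpha> * h1\<bar> \<le> \<bar>h1\<bar>"
        using elim(2) by (simp add: abs_mult mult_left_le_one_le)
      then have "\<bar>h0 - \<alpha> * h1\<bar> \<le> \<bar>h0\<bar> + \<bar>h1\<bar>" by linarith
      then show ?case using elim(1) by (simp add: expand)
    qed
  qed
  have "\<forall>\<^sub>F \<alpha> in at_right 0. \<forall>ij \<in> {..<r} \<times> {..<r}. 0 \<le> ?C' \<alpha> $$ ij"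
    using entry by (intro eventually_ball_finite) auto
  then show ?thesis
    by (rule eventually_mono) (use C D V in \<open>auto simp: nonneg_mat_def\<close>)
qed

lemma eventually_nonneg_refactorization:
  fixes B C D V :: "real mat"
  assumes B: "B \<in> carrier_mat n r" and B_nonneg: "nonneg_mat B"
    and C: "C \<in> carrier_mat r r" and C_nonneg: "nonneg_mat C" and C_sym: "transpose_mat C = C"
    and D: "D \<in> carrier_mat r r" and V: "V \<in> carrier_mat r r" and V_sym: "transpose_mat V = V"
    and first_order_B: "\<And>i j. i < n \<Longrightarrow> j < r \<Longrightarrow> B $$ (i, j) = 0 \<Longrightarrow> (B * D) $$ (i, j) < 0"
    and first_order_C: "\<And>i j. i < r \<Longrightarrow> j < r \<Longrightarrow> C $$ (i, j) = 0 \<Longrightarrow>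
      V $$ (i, j) < (D * C + C * transpose_mat D) $$ (i, j)"
  shows "\<forall>\<^sub>F \<alpha> in at_right 0. \<exists>B' C'. B' \<in> carrier_mat n r \<and> nonneg_mat B' \<and> C' \<in> symnn r \<and>
    B' * C' * transpose_mat B' = B * (C - \<alpha> \<cdot>\<^sub>m V) * transpose_mat B"
proof -
  have "\<forall>\<^sub>F \<alpha> in at_right 0. \<forall>M \<in> carrier_mat r r.
      (1\<^sub>m r + \<alpha> \<cdot>\<^sub>m D) * M = 1\<^sub>m r \<and> mat_bound M 2 \<longrightarrow> nonneg_mat (B * M)"
    by (rule eventually_nonneg_mult_inverse) (use B B_nonneg D first_order_B in auto)
  moreover have "\<forall>\<^sub>F \<alpha> in at_right 0.
      nonneg_mat ((1\<^sub>m r + \<alpha> \<cdot>\<^sub>m D) * (C - \<alpha> \<cdot>\<^sub>m V) * transpose_mat (1\<^sub>m r + \<alpha> \<cdot>\<^sub>m D))"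
    by (rule eventually_nonneg_congruence) (use C C_nonneg D V first_order_C in auto)
  ultimately show ?thesis using eventually_inverse_near_identity_bounded[OF D]
  proof eventually_elim
    case (elim \<alpha>)
    define P where "P = 1\<^sub>m r + \<alpha> \<cdot>\<^sub>m D"
    define X where "X = C - \<alpha> \<cdot>\<^sub>m V"
    have P: "P \<in> carrier_mat r r" using D by (simp add: P_def)
    have X: "X \<in> carrier_mat r r" using V by (simp add: X_def minus_carrier_mat)
    have X_sym: "transpose_mat X = X"
      using C V symmetric_mat_index[OF C C_sym] symmetric_mat_index[OF V V_sym]
      by (intro eq_matI) (auto simp: X_def)
    obtain M where M: "M \<in> carrier_mat r r" "M * P = 1\<^sub>m r" "P * M = 1\<^sub>m r" "mat_bound M 2"
      using elim(3) unfolding P_def by blast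
    have "P * X * transpose_mat P \<in> symnn r"
      using elim(2) P X transpose_congruence[OF P X X_sym] unfolding symnn_def P_def X_def by auto
    moreover have "nonneg_mat (B * M)" using elim(1) M unfolding P_def by blast
    moreover have "B * M * (P * X * transpose_mat P) * transpose_mat (B * M) = B * X * transpose_mat B"
      by (rule congruence_cancel[OF B M(1) P X M(2)])
    ultimately show ?case
      by (intro exI[of _ "B * M"] exI[of _ "P * X * transpose_mat P"]) (use B M(1) in \<open>auto simp: X_def\<close>)
  qed
qed

section \<open>A first-order direction by Farkas' lemma\<close>

text \<open>A linear program for the direction \<open>D\<close>: its unknowns are the entries \<open>D\<^sub>k\<^sub>l\<close>; the constraint
  \<open>Inl (i, j)\<close> reads \<open>- (B D)\<^sub>i\<^sub>j \<ge> 1\<close> and \<open>Inr (i, j)\<close> reads \<open>(D C + C D\<^sup>T)\<^sub>i\<^sub>j \<ge> 1 + V\<^sub>i\<^sub>j\<close>.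
  They are imposed only where \<open>B\<^sub>i\<^sub>j = 0\<close>, resp. \<open>C\<^sub>i\<^sub>j = 0\<close>; elsewhere they degenerate to \<open>0 \<ge> 0\<close>.\<close>

definition direction_lp_coeff :: "real mat \<Rightarrow> real mat \<Rightarrow> (nat \<times> nat) + (nat \<times> nat) \<Rightarrow> nat \<times> nat \<Rightarrow> real"
  where "direction_lp_coeff B C = case_sum
    (\<lambda>(i, j) (k, l). if l = j then if B $$ (i, j) = 0 then - B $$ (i, k) else 0 else 0)
    (\<lambda>(i, j) (k, l). if C $$ (i, j) = 0
       then (if k = i then C $$ (l, j) else 0) + (if k = j then C $$ (i, l) else 0) else 0)"

definition direction_lp_rhs :: "real mat \<Rightarrow> real mat \<Rightarrow> real mat \<Rightarrow> (nat \<times> nat) + (nat \<times> nat) \<Rightarrow> real"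
  where "direction_lp_rhs B C V = case_sum (\<lambda>(i, j). if B $$ (i, j) = 0 then 1 else 0)
    (\<lambda>(i, j). if C $$ (i, j) = 0 then 1 + V $$ (i, j) else 0)"

lemma sum_grid: "(\<Sum>kl\<in>{..<a} \<times> {..<b}. f kl) = (\<Sum>k<a. \<Sum>l<b. f (k, l))"
  by (simp add: sum.cartesian_product)

lemma direction_lp_solution:
  fixes B C V :: "real mat"
  assumes B: "B \<in> carrier_mat n r" and C: "C \<in> carrier_mat r r"
    and x: "\<forall>g \<in> ({..<n} \<times> {..<r}) <+> ({..<r} \<times> {..<r}).
      direction_lp_rhs B C V g \<le> (\<Sum>kl\<in>{..<r} \<times> {..<r}. direction_lp_coeff B C g kl * x kl)"
  shows "\<forall>i<n. \<forall>j<r. B $$ (i, j) = 0 \<longrightarrow> (B * mat r r x) $$ (i, j) < 0"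
    and "\<forall>i<r. \<forall>j<r. C $$ (i, j) = 0 \<longrightarrow> V $$ (i, j) < (mat r r x * C + C * transpose_mat (mat r r x)) $$ (i, j)"
proof -
  define D where "D = mat r r x"
  have D: "D \<in> carrier_mat r r" by (simp add: D_def)
  show "\<forall>i<n. \<forall>j<r. B $$ (i, j) = 0 \<longrightarrow> (B * mat r r x) $$ (i, j) < 0"
  proof (intro allI impI)
    fix i j assume ij: "i < n" "j < r" and zero: "B $$ (i, j) = 0"
    have coeff: "direction_lp_coeff B C (Inl (i, j)) (k, l) = (if l = j then - B $$ (i, k) else 0)" for k l
      using zero by (simp add: direction_lp_coeff_def)
    have mem: "Inl (i, j) \<in> ({..<n} \<times> {..<r}) <+> ({..<r} \<times> {..<r})" using ij by auto
    have "1 \<le> (\<Sum>k<r. \<Sum>l<r. (if l = j then - B $$ (i, k) else 0) * x (k, l))"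
      using zero bspec[OF x mem] by (simp add: direction_lp_rhs_def sum_grid coeff)
    also have "\<dots> = - (B * D) $$ (i, j)"
      unfolding index_mult_mat_sum[OF B D ij] using ij
      by (simp add: D_def if_distrib[of "\<lambda>z. z * _"] sum.delta' sum_negf cong: if_cong)
    finally show "(B * mat r r x) $$ (i, j) < 0" by (simp add: D_def)
  qed
  show "\<forall>i<r. \<forall>j<r. C $$ (i, j) = 0 \<longrightarrow>
      V $$ (i, j) < (mat r r x * C + C * transpose_mat (mat r r x)) $$ (i, j)"
  proof (intro allI impI)
    fix i j assume ij: "i < r" "j < r" and zero: "C $$ (i, j) = 0"
    have coeff: "direction_lp_coeff B C (Inr (i, j)) (k, l) =
        (if k = i then C $$ (l, j) else 0) + (if k = j then C $$ (i, l) else 0)" for k l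
      using zero by (simp add: direction_lp_coeff_def)
    have mem: "Inr (i, j) \<in> ({..<n} \<times> {..<r}) <+> ({..<r} \<times> {..<r})" using ij by auto
    have "1 + V $$ (i, j) \<le> (\<Sum>k<r. \<Sum>l<r.
        ((if k = i then C $$ (l, j) else 0) + (if k = j then C $$ (i, l) else 0)) * x (k, l))"
      using zero bspec[OF x mem] by (simp add: direction_lp_rhs_def sum_grid coeff)
    also have "\<dots> = (\<Sum>l<r. C $$ (l, j) * x (i, l)) + (\<Sum>l<r. C $$ (i, l) * x (j, l))"
      using ij by (subst sum.swap) (simp add: distrib_right sum.distrib if_distrib[of "\<lambda>z. z * _"]
          sum.delta cong: if_cong)
    also have "\<dots> = (D * C) $$ (i, j) + (C * transpose_mat D) $$ (i, j)"
      unfolding index_mult_mat_sum[OF D C ij]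
        index_mult_mat_sum[OF C transpose_carrier_mat[THEN iffD2, OF D] ij]
      using ij by (simp add: D_def mult.commute)
    also have "\<dots> = (D * C + C * transpose_mat D) $$ (i, j)"
      using ij C D by simp
    finally show "V $$ (i, j) < (mat r r x * C + C * transpose_mat (mat r r x)) $$ (i, j)"
      by (simp add: D_def)
  qed
qed

lemma direction_lp_combination:
  fixes B C :: "real mat" and n r :: nat and l :: "(nat \<times> nat) + (nat \<times> nat) \<Rightarrow> real"
  defines "X \<equiv> mat n r (\<lambda>(i, j). if B $$ (i, j) = 0 then l (Inl (i, j)) else 0)"
    and "W' \<equiv> mat r r (\<lambda>(i, j). if C $$ (i, j) = 0 then l (Inr (i, j)) else 0)"
  assumes B: "B \<in> carrier_mat n r" and C: "C \<in> carrier_mat r r" "transpose_mat C = C"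
    and km: "k < r" "m < r"
  shows "(\<Sum>g\<in>({..<n} \<times> {..<r}) <+> ({..<r} \<times> {..<r}). l g * direction_lp_coeff B C g (k, m)) =
    ((W' + transpose_mat W') * C) $$ (k, m) - (transpose_mat B * X) $$ (k, m)"
proof -
  have X: "X \<in> carrier_mat n r" and W': "W' \<in> carrier_mat r r" by (simp_all add: X_def W'_def)
  have W: "W' + transpose_mat W' \<in> carrier_mat r r" using W' by simp
  have Bt: "transpose_mat B \<in> carrier_mat r n" using B by simp
  have "(\<Sum>i<n. \<Sum>j<r. l (Inl (i, j)) * direction_lp_coeff B C (Inl (i, j)) (k, m)) =
      (\<Sum>i<n. - (B $$ (i, k) * X $$ (i, m)))"
    using km by (simp add: direction_lp_coeff_def X_def if_distrib[of "\<lambda>z. _ * z"] if_distrib[of uminus]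
        sum.delta' mult.commute cong: if_cong)
  also have "\<dots> = - (transpose_mat B * X) $$ (k, m)"
    unfolding index_mult_mat_sum[OF Bt X km] sum_negf using B km by simp
  finally have B_part: "(\<Sum>i<n. \<Sum>j<r. l (Inl (i, j)) * direction_lp_coeff B C (Inl (i, j)) (k, m)) =
      - (transpose_mat B * X) $$ (k, m)" .
  have "(\<Sum>i<r. \<Sum>j<r. l (Inr (i, j)) * direction_lp_coeff B C (Inr (i, j)) (k, m)) =
      (\<Sum>i<r. \<Sum>j<r. W' $$ (i, j) * ((if k = i then C $$ (m, j) else 0) + (if k = j then C $$ (i, m) else 0)))"
    by (intro sum.cong refl) (simp add: direction_lp_coeff_def W'_def)
  also have "\<dots> = (\<Sum>i<r. \<Sum>j<r. if k = i then W' $$ (i, j) * C $$ (m, j) else 0) +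
      (\<Sum>i<r. \<Sum>j<r. if k = j then W' $$ (i, j) * C $$ (i, m) else 0)"
    by (simp add: distrib_left sum.distrib if_distrib[of "\<lambda>z. _ * z"] cong: if_cong)
  also have "\<dots> = (\<Sum>j<r. W' $$ (k, j) * C $$ (j, m)) + (\<Sum>i<r. W' $$ (i, k) * C $$ (i, m))"
    using km symmetric_mat_index[OF C] by (subst sum.swap) (simp add: sum.delta)
  also have "\<dots> = ((W' + transpose_mat W') * C) $$ (k, m)"
    unfolding index_mult_mat_sum[OF W C(1) km] using km W' by (simp add: distrib_right sum.distrib)
  finally have C_part: "(\<Sum>i<r. \<Sum>j<r. l (Inr (i, j)) * direction_lp_coeff B C (Inr (i, j)) (k, m)) =
      ((W' + transpose_mat W') * C) $$ (k, m)" .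
  show ?thesis
    by (simp add: sum.Plus sum_grid B_part C_part)
qed

lemma direction_lp_multiplier_certificate:
  fixes B C :: "real mat" and n r :: nat and l :: "(nat \<times> nat) + (nat \<times> nat) \<Rightarrow> real"
  defines "X \<equiv> mat n r (\<lambda>(i, j). if B $$ (i, j) = 0 then l (Inl (i, j)) else 0)"
    and "W' \<equiv> mat r r (\<lambda>(i, j). if C $$ (i, j) = 0 then l (Inr (i, j)) else 0)"
  assumes B: "B \<in> carrier_mat n r" and C: "C \<in> carrier_mat r r" "transpose_mat C = C"
    and l_nonneg: "\<forall>g \<in> ({..<n} \<times> {..<r}) <+> ({..<r} \<times> {..<r}). 0 \<le> l g"
    and balance: "\<forall>km \<in> {..<r} \<times> {..<r}.
      (\<Sum>g\<in>({..<n} \<times> {..<r}) <+> ({..<r} \<times> {..<r}). l g * direction_lp_coeff B C g km) = 0"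
  shows "X \<in> carrier_mat n r \<and> nonneg_mat X \<and> W' + transpose_mat W' \<in> carrier_mat r r \<and>
    nonneg_mat (W' + transpose_mat W') \<and> transpose_mat (W' + transpose_mat W') = W' + transpose_mat W' \<and>
    hadamard X B = 0\<^sub>m n r \<and> hadamard (W' + transpose_mat W') C = 0\<^sub>m r r \<and>
    (W' + transpose_mat W') * C = transpose_mat B * X"
proof (intro conjI)
  have X: "X \<in> carrier_mat n r" and W': "W' \<in> carrier_mat r r" by (simp_all add: X_def W'_def)
  then show "X \<in> carrier_mat n r" "W' + transpose_mat W' \<in> carrier_mat r r" by simp_all
  have "((W' + transpose_mat W') * C) $$ (k, m) = (transpose_mat B * X) $$ (k, m)"
    if km: "k < r" "m < r" for k m
    using direction_lp_combination[OF B C km, of l, folded X_def W'_def] balance km by simp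
  then show "(W' + transpose_mat W') * C = transpose_mat B * X"
    using B C X W' by (intro eq_matI) auto
  have "0 \<le> l (Inl (i, j))" if "i < n" "j < r" for i j
    using l_nonneg that by auto
  then show "nonneg_mat X" by (auto simp: nonneg_mat_def X_def)
  have "0 \<le> l (Inr (i, j))" if "i < r" "j < r" for i j
    using l_nonneg that by auto
  then show "nonneg_mat (W' + transpose_mat W')" by (auto simp: nonneg_mat_def W'_def)
  have "transpose_mat (W' + transpose_mat W') = transpose_mat W' + W'" using W' by (simp add: transpose_add)
  also have "\<dots> = W' + transpose_mat W'" by (rule comm_add_mat) (use W' in auto)
  finally show "transpose_mat (W' + transpose_mat W') = W' + transpose_mat W'" .
  show "hadamard X B = 0\<^sub>m n r" "hadamard (W' + transpose_mat W') C = 0\<^sub>m r r"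
    using B C symmetric_mat_index[OF C] by (auto simp: hadamard_def X_def W'_def intro!: eq_matI)
qed

lemma direction_lp_no_certificate:
  fixes B C V :: "real mat" and l :: "(nat \<times> nat) + (nat \<times> nat) \<Rightarrow> real"
  assumes B: "B \<in> carrier_mat n r" and C: "C \<in> carrier_mat r r" "transpose_mat C = C"
    and no_certificate: "\<forall>X W. X \<in> carrier_mat n r \<and> nonneg_mat X \<and> W \<in> carrier_mat r r \<and> nonneg_mat W \<and>
      transpose_mat W = W \<and> hadamard X B = 0\<^sub>m n r \<and> hadamard W C = 0\<^sub>m r r \<and>
      W * C = transpose_mat B * X \<longrightarrow> X = 0\<^sub>m n r \<and> W = 0\<^sub>m r r"
    and l_nonneg: "\<forall>g \<in> ({..<n} \<times> {..<r}) <+> ({..<r} \<times> {..<r}). 0 \<le> l g"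
    and balance: "\<forall>km \<in> {..<r} \<times> {..<r}.
      (\<Sum>g\<in>({..<n} \<times> {..<r}) <+> ({..<r} \<times> {..<r}). l g * direction_lp_coeff B C g km) = 0"
  shows "(\<Sum>g\<in>({..<n} \<times> {..<r}) <+> ({..<r} \<times> {..<r}). l g * direction_lp_rhs B C V g) = 0"
proof -
  define X where "X = mat n r (\<lambda>(i, j). if B $$ (i, j) = 0 then l (Inl (i, j)) else 0)"
  define W' where "W' = mat r r (\<lambda>(i, j). if C $$ (i, j) = 0 then l (Inr (i, j)) else 0)"
  have W': "W' \<in> carrier_mat r r" by (simp add: W'_def)
  have zero: "X = 0\<^sub>m n r \<and> W' + transpose_mat W' = 0\<^sub>m r r"
    using no_certificate direction_lp_multiplier_certificate[OF B C l_nonneg balance]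
    unfolding X_def W'_def by blast
  have "l (Inl (i, j)) * direction_lp_rhs B C V (Inl (i, j)) = 0" if "i < n" "j < r" for i j
    using zero that by (auto simp: direction_lp_rhs_def X_def dest!: arg_cong[of _ _ "\<lambda>M. M $$ (i, j)"])
  moreover have "l (Inr (i, j)) * direction_lp_rhs B C V (Inr (i, j)) = 0" if "i < r" "j < r" for i j
  proof -
    have "W' $$ (i, j) + W' $$ (j, i) = 0"
      using arg_cong[OF conjunct2[OF zero], of "\<lambda>M. M $$ (i, j)"] that W' by simp
    moreover have "0 \<le> l (Inr (i, j))" "0 \<le> l (Inr (j, i))" using l_nonneg that by auto
    ultimately show ?thesis
      using that by (simp add: direction_lp_rhs_def W'_def symmetric_mat_index[OF C] split: if_splits)
  qed
  ultimately show ?thesis by (simp add: sum.Plus sum_grid sum.neutral)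
qed

lemma exists_first_order_direction:
  fixes B C V :: "real mat"
  assumes B: "B \<in> carrier_mat n r" and C: "C \<in> carrier_mat r r" "transpose_mat C = C"
    and no_certificate: "\<forall>X W. X \<in> carrier_mat n r \<and> nonneg_mat X \<and> W \<in> carrier_mat r r \<and> nonneg_mat W \<and>
      transpose_mat W = W \<and> hadamard X B = 0\<^sub>m n r \<and> hadamard W C = 0\<^sub>m r r \<and>
      W * C = transpose_mat B * X \<longrightarrow> X = 0\<^sub>m n r \<and> W = 0\<^sub>m r r"
  shows "\<exists>D \<in> carrier_mat r r. (\<forall>i<n. \<forall>j<r. B $$ (i, j) = 0 \<longrightarrow> (B * D) $$ (i, j) < 0) \<and>
    (\<forall>i<r. \<forall>j<r. C $$ (i, j) = 0 \<longrightarrow> V $$ (i, j) < (D * C + C * transpose_mat D) $$ (i, j))"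
proof -
  have "finite (({..<n} \<times> {..<r}) <+> ({..<r} \<times> {..<r}))" "finite ({..<r} \<times> {..<r})" by auto
  from farkas_lemma[OF this, of "direction_lp_rhs B C V" "direction_lp_coeff B C"]
  show ?thesis
  proof (elim disjE exE conjE)
    fix x assume "\<forall>g \<in> ({..<n} \<times> {..<r}) <+> ({..<r} \<times> {..<r}).
      direction_lp_rhs B C V g \<le> (\<Sum>kl\<in>{..<r} \<times> {..<r}. direction_lp_coeff B C g kl * x kl)"
    from direction_lp_solution[OF B C(1) this] show ?thesis
      by (intro bexI[of _ "mat r r x"]) auto
  next
    fix l assume "\<forall>g \<in> ({..<n} \<times> {..<r}) <+> ({..<r} \<times> {..<r}). 0 \<le> l g"
      and "\<forall>km \<in> {..<r} \<times> {..<r}.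
        (\<Sum>g\<in>({..<n} \<times> {..<r}) <+> ({..<r} \<times> {..<r}). l g * direction_lp_coeff B C g km) = 0"
      and "0 < (\<Sum>g\<in>({..<n} \<times> {..<r}) <+> ({..<r} \<times> {..<r}). l g * direction_lp_rhs B C V g)"
    with direction_lp_no_certificate[OF B C no_certificate] show ?thesis by simp
  qed
qed

section \<open>Downdating along the Perron vector\<close>

lemma snt_rank_factorization:
  assumes "B \<in> carrier_mat (dim_row A) k" "nonneg_mat B" "C \<in> symnn k" "A = B * C * transpose_mat B"
  shows "snt_rank A \<le> k"
    and "\<exists>B C. B \<in> carrier_mat (dim_row A) (snt_rank A) \<and> nonneg_mat B \<and> C \<in> symnn (snt_rank A) \<and>
      A = B * C * transpose_mat B"
proof -
  have "\<exists>B C. B \<in> carrier_mat (dim_row A) k \<and> nonneg_mat B \<and> C \<in> symnn k \<and> A = B * C * transpose_mat B"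
    by (intro exI[of _ B] exI[of _ C] conjI) (rule assms)+
  then show "snt_rank A \<le> k"
    and "\<exists>B C. B \<in> carrier_mat (dim_row A) (snt_rank A) \<and> nonneg_mat B \<and> C \<in> symnn (snt_rank A) \<and>
      A = B * C * transpose_mat B"
    unfolding snt_rank_def by (rule Least_le, rule LeastI)
qed

lemma mrank_le_snt_rank:
  assumes "B \<in> carrier_mat (dim_row A) k" "nonneg_mat B" "C \<in> symnn k" "A = B * C * transpose_mat B"
  shows "mrank A \<le> snt_rank A"
proof -
  let ?m = "snt_rank A"
  obtain B' C' where B': "B' \<in> carrier_mat (dim_row A) ?m" and "C' \<in> symnn ?m"
    and A: "A = B' * C' * transpose_mat B'"
    using snt_rank_factorization(2)[OF assms] by blast
  then have C': "C' \<in> carrier_mat ?m ?m" by (simp add: symnn_def)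
  have "mrank A \<le> mrank B'"
    unfolding A using B' C' by (simp add: mrank_mult_le[OF B', of "C' * transpose_mat B'" "dim_row A"])
  also have "\<dots> \<le> ?m" by (rule mrank_le_dim_col[OF B'])
  finally show ?thesis .
qed

text \<open>Removing part of the eigencomponent \<open>\<rho> u u\<^sup>T\<close> does not lower the rank, because
  \<open>(A - \<alpha> u u\<^sup>T) (1 + \<alpha> / (\<rho> - \<alpha>) u u\<^sup>T) = A\<close>.\<close>

lemma mrank_le_eigen_downdate:
  fixes A :: "real mat"
  assumes A: "A \<in> carrier_mat n n" and u: "u \<in> carrier_vec n" "u \<bullet> u = 1"
    and eigen: "A *\<^sub>v u = \<rho> \<cdot>\<^sub>v u" and \<alpha>: "\<alpha> \<noteq> \<rho>"
  shows "mrank A \<le> mrank (A - \<alpha> \<cdot>\<^sub>m outer u)"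
proof -
  define A' where "A' = A - \<alpha> \<cdot>\<^sub>m outer u"
  define Y where "Y = 1\<^sub>m n + (\<alpha> / (\<rho> - \<alpha>)) \<cdot>\<^sub>m outer u"
  have U: "outer u \<in> carrier_mat n n" using u by (simp add: outer_carrier)
  have A': "A' \<in> carrier_mat n n" and Y: "Y \<in> carrier_mat n n"
    using A U by (auto simp: A'_def Y_def minus_carrier_mat)
  have uu: "(\<Sum>k<n. u $ k * u $ k) = 1" using u by (auto simp: scalar_prod_def atLeast0LessThan)
  have A'u: "(\<Sum>k<n. A' $$ (i, k) * u $ k) = (\<rho> - \<alpha>) * u $ i" if i: "i < n" for i
  proof -
    have "(\<Sum>k<n. A' $$ (i, k) * u $ k) = (\<Sum>k<n. A $$ (i, k) * u $ k) - \<alpha> * u $ i * (\<Sum>k<n. u $ k * u $ k)"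
      using i A U u(1)
      by (simp add: A'_def outer_index sum_subtractf sum_distrib_left algebra_simps)
    also have "(\<Sum>k<n. A $$ (i, k) * u $ k) = (A *\<^sub>v u) $ i"
      by (rule index_mult_mat_vec_sum[OF A u(1) i, symmetric])
    also have "\<dots> = \<rho> * u $ i" using eigen i u(1) by simp
    finally show ?thesis using uu by (simp add: algebra_simps)
  qed
  have "A' * Y = A"
  proof (rule eq_matI)
    fix i j assume "i < dim_row A" "j < dim_col A"
    then have ij: "i < n" "j < n" using A by auto
    have "Y $$ (k, j) = (if k = j then 1 else 0) + \<alpha> / (\<rho> - \<alpha>) * (u $ k * u $ j)" if "k < n" for k
      using that ij u(1) by (simp add: Y_def outer_def)
    then have "(A' * Y) $$ (i, j) = (\<Sum>k<n. A' $$ (i, k) * ((if k = j then 1 else 0) +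
        \<alpha> / (\<rho> - \<alpha>) * (u $ k * u $ j)))"
      unfolding index_mult_mat_sum[OF A' Y ij] by (intro sum.cong) auto
    also have "\<dots> = A' $$ (i, j) + \<alpha> / (\<rho> - \<alpha>) * u $ j * (\<Sum>k<n. A' $$ (i, k) * u $ k)"
      using ij by (simp add: distrib_left sum.distrib sum_distrib_left if_distrib[of "\<lambda>z. _ * z"]
          algebra_simps cong: if_cong)
    also have "\<dots> = A' $$ (i, j) + \<alpha> / (\<rho> - \<alpha>) * u $ j * ((\<rho> - \<alpha>) * u $ i)"
      by (simp only: A'u[OF ij(1)])
    also have "\<dots> = A $$ (i, j)"
      using ij A U u(1) \<alpha> by (simp add: A'_def outer_index)
    finally show "(A' * Y) $$ (i, j) = A $$ (i, j)" .
  qed (use A A' Y in auto)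
  then have "mrank A = mrank (A' * Y)" by simp
  also have "\<dots> \<le> mrank A'" by (rule mrank_mult_le[OF A' Y])
  finally show ?thesis unfolding A'_def .
qed

lemma downdate_in_E_set:
  fixes A B' C' :: "real mat"
  assumes A: "A \<in> symnn n" "mrank A = r"
    and u: "u \<in> carrier_vec n" "u \<bullet> u = 1" "A *\<^sub>v u = \<rho> \<cdot>\<^sub>v u" and \<alpha>: "\<alpha> \<noteq> \<rho>"
    and B': "B' \<in> carrier_mat n r" "nonneg_mat B'" and C': "C' \<in> symnn r"
    and factor: "B' * C' * transpose_mat B' = A - \<alpha> \<cdot>\<^sub>m outer u"
  shows "A - \<alpha> \<cdot>\<^sub>m outer u \<in> E_set n"
proof -
  let ?A' = "A - \<alpha> \<cdot>\<^sub>m outer u"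
  have C'c: "C' \<in> carrier_mat r r" "nonneg_mat C'" "transpose_mat C' = C'"
    using C' by (auto simp: symnn_def)
  have A'c: "?A' \<in> carrier_mat n n" using u A by (simp add: symnn_def outer_carrier minus_carrier_mat)
  have "nonneg_mat (B' * C' * transpose_mat B')"
    using B' C'c by (intro nonneg_mat_mult nonneg_mat_transpose) auto
  then have "?A' \<in> symnn n"
    using A'c transpose_congruence[OF B'(1) C'c(1,3)] by (simp add: symnn_def factor)
  moreover have "mrank ?A' \<le> snt_rank ?A'"
    using A'c B' C' factor by (intro mrank_le_snt_rank[of B' _ r C']) auto
  moreover have "snt_rank ?A' \<le> r"
    using A'c B' C' factor by (intro snt_rank_factorization(1)[of B' _ r C']) auto
  moreover have "r \<le> mrank ?A'"
    using mrank_le_eigen_downdate[of A n u \<rho> \<alpha>] A u \<alpha> by (auto simp: symnn_def)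
  ultimately show ?thesis by (simp add: E_set_def)
qed

lemma congruence_downdate_outer:
  fixes B C :: "real mat"
  assumes B: "B \<in> carrier_mat n r" and C: "C \<in> carrier_mat r r" and v: "v \<in> carrier_vec r"
  shows "B * (C - \<alpha> \<cdot>\<^sub>m outer v) * transpose_mat B = B * C * transpose_mat B - \<alpha> \<cdot>\<^sub>m outer (B *\<^sub>v v)"
proof -
  have V: "outer v \<in> carrier_mat r r" using v by (rule outer_carrier)
  have "B * (C - \<alpha> \<cdot>\<^sub>m outer v) = B * C - \<alpha> \<cdot>\<^sub>m (B * outer v)"
    using B C V by (rule mult_minus_smult_mat)
  moreover have "(B * C - \<alpha> \<cdot>\<^sub>m (B * outer v)) * transpose_mat B =
      B * C * transpose_mat B - \<alpha> \<cdot>\<^sub>m (B * outer v * transpose_mat B)"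
    using B C V by (intro minus_smult_mult_mat) auto
  ultimately show ?thesis by (simp only: mult_outer_transpose[OF B v])
qed

lemma eigenvector_in_column_space:
  fixes A B C :: "real mat"
  assumes B: "B \<in> carrier_mat n r" and C: "C \<in> carrier_mat r r" and A: "A = B * C * transpose_mat B"
    and u: "u \<in> carrier_vec n" and eigen: "A *\<^sub>v u = \<rho> \<cdot>\<^sub>v u" and \<rho>: "\<rho> \<noteq> 0"
  shows "B *\<^sub>v ((1 / \<rho>) \<cdot>\<^sub>v (C *\<^sub>v (transpose_mat B *\<^sub>v u))) = u"
proof -
  have w: "C *\<^sub>v (transpose_mat B *\<^sub>v u) \<in> carrier_vec r" using B C u by simp
  have "B *\<^sub>v (C *\<^sub>v (transpose_mat B *\<^sub>v u)) = A *\<^sub>v u"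
    using B C u unfolding A by (simp add: assoc_mult_mat_vec[of _ n r _ n])
  then have "B *\<^sub>v ((1 / \<rho>) \<cdot>\<^sub>v (C *\<^sub>v (transpose_mat B *\<^sub>v u))) = (1 / \<rho>) \<cdot>\<^sub>v (\<rho> \<cdot>\<^sub>v u)"
    using mult_mat_vec[OF B w] eigen by simp
  also have "\<dots> = u" using \<rho> by (simp add: smult_smult_assoc)
  finally show ?thesis .
qed

lemma perron_eigenpair:
  assumes A: "A \<in> symnn n" "A \<noteq> 0\<^sub>m n n" and perron: "perron_vec A u"
  shows "u \<in> carrier_vec n" "u \<bullet> u = 1"
    "A *\<^sub>v u = spectral_radius (map_mat complex_of_real A) \<cdot>\<^sub>v u"
    "0 < spectral_radius (map_mat complex_of_real A)"
proof -
  have "A \<in> carrier_mat n n" "transpose_mat A = A" using A(1) by (auto simp: symnn_def)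
  then show "0 < spectral_radius (map_mat complex_of_real A)"
    using A(2) by (rule spectral_radius_pos_symmetric)
  show "u \<in> carrier_vec n" "u \<bullet> u = 1" "A *\<^sub>v u = spectral_radius (map_mat complex_of_real A) \<cdot>\<^sub>v u"
    using perron \<open>A \<in> carrier_mat n n\<close> by (auto simp: perron_vec_def)
qed

lemma eventually_downdate_in_E_set:
  fixes A B C :: "real mat"
  assumes A: "A \<in> symnn n" "mrank A = r"
    and B: "B \<in> carrier_mat n r" "nonneg_mat B"
    and C: "C \<in> carrier_mat r r" "nonneg_mat C" "transpose_mat C = C"
    and ABC: "A = B * C * transpose_mat B"
    and no_certificate: "\<forall>X W. X \<in> carrier_mat n r \<and> nonneg_mat X \<and> W \<in> carrier_mat r r \<and> nonneg_mat W \<and>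
      transpose_mat W = W \<and> hadamard X B = 0\<^sub>m n r \<and> hadamard W C = 0\<^sub>m r r \<and>
      W * C = transpose_mat B * X \<longrightarrow> X = 0\<^sub>m n r \<and> W = 0\<^sub>m r r"
    and u: "u \<in> carrier_vec n" "u \<bullet> u = 1" "A *\<^sub>v u = \<rho> \<cdot>\<^sub>v u" and \<rho>: "0 < \<rho>"
  shows "\<forall>\<^sub>F \<alpha> in at_right 0. A - \<alpha> \<cdot>\<^sub>m outer u \<in> E_set n"
proof -
  define v where "v = (1 / \<rho>) \<cdot>\<^sub>v (C *\<^sub>v (transpose_mat B *\<^sub>v u))"
  have v: "v \<in> carrier_vec r" using B C u by (simp add: v_def)
  have Bv: "B *\<^sub>v v = u"
    unfolding v_def using eigenvector_in_column_space[OF B(1) C(1) ABC u(1,3)] \<rho> by simp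
  obtain D where D: "D \<in> carrier_mat r r"
    and first_order: "\<forall>i<n. \<forall>j<r. B $$ (i, j) = 0 \<longrightarrow> (B * D) $$ (i, j) < 0"
      "\<forall>i<r. \<forall>j<r. C $$ (i, j) = 0 \<longrightarrow> outer v $$ (i, j) < (D * C + C * transpose_mat D) $$ (i, j)"
    using exists_first_order_direction[OF B(1) C(1,3) no_certificate] by blast
  have "\<forall>\<^sub>F \<alpha> in at_right 0. \<exists>B' C'. B' \<in> carrier_mat n r \<and> nonneg_mat B' \<and> C' \<in> symnn r \<and>
      B' * C' * transpose_mat B' = B * (C - \<alpha> \<cdot>\<^sub>m outer v) * transpose_mat B"
    by (rule eventually_nonneg_refactorization[where D = D])
      (use B C D v first_order in \<open>auto simp: outer_carrier transpose_outer\<close>)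
  moreover have "\<forall>\<^sub>F \<alpha> in at_right 0. \<alpha> \<in> {0<..<\<rho>}" using \<rho> by (rule eventually_at_right_real)
  ultimately show ?thesis
  proof eventually_elim
    case (elim \<alpha>)
    then obtain B' C' where B': "B' \<in> carrier_mat n r" "nonneg_mat B'" and C': "C' \<in> symnn r"
      and factor: "B' * C' * transpose_mat B' = B * (C - \<alpha> \<cdot>\<^sub>m outer v) * transpose_mat B"
      by blast
    have "B' * C' * transpose_mat B' = A - \<alpha> \<cdot>\<^sub>m outer u"
      unfolding factor congruence_downdate_outer[OF B(1) C(1) v] Bv ABC ..
    then show ?case using downdate_in_E_set[OF A u] elim B' C' by simp
  qed
qed

theorem mainTheorem13:
  fixes A B C :: "real mat" and n r :: nat
  assumes "A \<in> E_set n"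
    and "mrank A = r"
    and "A \<noteq> 0\<^sub>m n n"
    and "B \<in> carrier_mat n r" and "nonneg_mat B"
    and "C \<in> carrier_mat r r" and "nonneg_mat C" and "transpose_mat C = C"
    and "A = B * C * transpose_mat B"
    and "\<forall>X W. X \<in> carrier_mat n r \<and> nonneg_mat X \<and> W \<in> carrier_mat r r \<and> nonneg_mat W \<and>
            transpose_mat W = W \<and> hadamard X B = 0\<^sub>m n r \<and> hadamard W C = 0\<^sub>m r r \<and>
            W * C = transpose_mat B * X \<longrightarrow> X = 0\<^sub>m n r \<and> W = 0\<^sub>m r r"
  shows "A \<notin> bd_E n"
proof
  assume "A \<in> bd_E n"
  then obtain u where perron: "perron_vec A u" and maximal: "\<forall>\<alpha>>0. A - \<alpha> \<cdot>\<^sub>m outer u \<notin> E_set n"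
    by (auto simp: bd_E_def)
  have A: "A \<in> symnn n" using assms(1) by (simp add: E_set_def)
  note eigen = perron_eigenpair[OF A assms(3) perron]
  have "\<forall>\<^sub>F \<alpha> in at_right 0. A - \<alpha> \<cdot>\<^sub>m outer u \<in> E_set n"
    by (rule eventually_downdate_in_E_set[OF A assms(2,4-10) eigen])
  moreover have "\<forall>\<^sub>F \<alpha> in at_right 0. (0::real) < \<alpha>" by (rule eventually_at_right_less)
  ultimately have "\<exists>\<alpha>. A - \<alpha> \<cdot>\<^sub>m outer u \<in> E_set n \<and> 0 < \<alpha>"
    by (intro eventually_happens'[OF trivial_limit_at_right_real eventually_conj])
  with maximal show False by blast
qed

end
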